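(* Let $k$ be a field and $\mathsf{E}$ a lower finite $k$-linear category. Then the contramodule forgetful functor $\Theta_\mathsf{E}$ from left $\mathcal{C}_\mathsf{E}$-contramodules to left $\mathsf{E}$-modules is an equivalence of categories.
   Context: A small $k$-linear category $\mathsf{E}$ has $k$-vector spaces $\operatorname{Hom}_\mathsf{E}(x,y)$, $k$-bilinear associative composition and identities with $\mathrm{id}_x\ne0$. A left $\mathsf{E}$-module is a $k$-linear functor $\mathsf{E}\to k\text{-Vect}$. Write $x\preceq y$ if there are $n\ge1$ and objects $x=z_0,\dots,z_n=y$ with $\operatorname{Hom}_\mathsf{E}(z_{i-1},z_i)\neq0$ for all $i$. $\mathsf{E}$ is locally finite if all $\operatorname{Hom}_\mathsf{E}(x,y)$ are finite-dimensional and every $\{z:x\preceq z\preceq y\}$ is finite; it is lower finite if it is locally finite and for every object $y$ the set $\{x: x\preceq y\}$ is finite. $\mathcal{C}_\mathsf{E}=\bigoplus_{x,y}\mathcal{C}^{x,y}$, $\mathcal{C}^{x,y}=\operatorname{Hom}_\mathsf{E}(x,y)^*$; counit zero on $\mathcal{C}^{x,y}$ for $x\ne y$, evaluation at $\mathrm{id}_x$ on $\mathcal{C}^{x,x}$; comultiplication $\mathcal{C}^{x,y}\to\bigoplus_z\mathcal{C}^{x,z}\otimes\mathcal{C}^{z,y}$ dual to composition $g\otimes h\mapsto hg$. A left contramodule over a coalgebra $(\mathcal{C},\mu,\epsilon)$ is a space $\mathfrak{P}$ with $\pi:\operatorname{Hom}_k(\mathcal{C},\mathfrak{P})\to\mathfrak{P}$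 such that $\pi(c\mapsto\epsilon(c)p)=p$ and, under $\operatorname{Hom}_k(\mathcal{C},\operatorname{Hom}_k(\mathcal{C},\mathfrak{P}))\cong\operatorname{Hom}_k(\mathcal{C}\otimes\mathcal{C},\mathfrak{P})$, $f\mapsto(c'\otimes c''\mapsto f(c'')(c'))$, $\pi(c\mapsto\pi(f(c)))=\pi(f\circ\mu)$; morphisms commute with $\pi$. Set $\varphi\cdot p=\pi(c\mapsto\varphi(c)p)$ for $\varphi\in\mathcal{C}^*$. With $e_x$ evaluation at $\mathrm{id}_x$ on $\mathcal{C}^{x,x}$ (zero elsewhere) and $\mathrm{ev}_f$, for $f\in\operatorname{Hom}_\mathsf{E}(x,y)$, evaluation at $f$ on $\mathcal{C}^{x,y}$ (zero elsewhere): $\Theta_\mathsf{E}(\mathfrak{P})(x)=e_x\cdot\mathfrak{P}$ (with $\mathfrak{P}\cong\prod_xe_x\cdot\mathfrak{P}$), $f$ acting by $p\mapsto\mathrm{ev}_f\cdot p$; on morphisms it takes restrictions. *)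

theory Defs
  imports Main "HOL.Vector_Spaces" "HOL-Library.Function_Algebras"
begin

definition lin_on :: "('k \<Rightarrow> 'a \<Rightarrow> 'a) \<Rightarrow> ('k \<Rightarrow> 'b \<Rightarrow> 'b) \<Rightarrow> 'a::ab_group_add set
    \<Rightarrow> ('a \<Rightarrow> 'b::ab_group_add) \<Rightarrow> bool" where
  "lin_on s1 s2 A f \<longleftrightarrow>
     (\<forall>u\<in>A. \<forall>v\<in>A. f (u + v) = f u + f v) \<and> (\<forall>a. \<forall>u\<in>A. f (s1 a u) = s2 a (f u))"

text \<open>All hom-spaces are subspaces of one ambient k-vector space of type 'h
  (with scalar multiplication hsc).  cmp x y z g h is the composite h g of
  g in Hom x y and h in Hom y z.\<close>

record ('o, 'h, 'k) klcat =
  Ob  :: "'o set"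
  Hom :: "'o \<Rightarrow> 'o \<Rightarrow> 'h set"
  cmp :: "'o \<Rightarrow> 'o \<Rightarrow> 'o \<Rightarrow> 'h \<Rightarrow> 'h \<Rightarrow> 'h"
  idm :: "'o \<Rightarrow> 'h"
  hsc :: "'k \<Rightarrow> 'h \<Rightarrow> 'h"

definition klinear_cat :: "('o, 'h::ab_group_add, 'k::field) klcat \<Rightarrow> bool" where
  "klinear_cat E \<longleftrightarrow>
     vector_space (hsc E) \<and>
     (\<forall>x\<in>Ob E. \<forall>y\<in>Ob E. module.subspace (hsc E) (Hom E x y)) \<and>
     (\<forall>x\<in>Ob E. idm E x \<in> Hom E x x \<and> idm E x \<noteq> 0) \<and>
     (\<forall>x\<in>Ob E. \<forall>y\<in>Ob E. \<forall>z\<in>Ob E. \<forall>g\<in>Hom E x y. \<forall>h\<in>Hom E y z.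
        cmp E x y z g h \<in> Hom E x z) \<and>
     (\<forall>x\<in>Ob E. \<forall>y\<in>Ob E. \<forall>z\<in>Ob E.
        (\<forall>g\<in>Hom E x y. lin_on (hsc E) (hsc E) (Hom E y z) (cmp E x y z g)) \<and>
        (\<forall>h\<in>Hom E y z. lin_on (hsc E) (hsc E) (Hom E x y) (\<lambda>g. cmp E x y z g h))) \<and>
     (\<forall>x\<in>Ob E. \<forall>y\<in>Ob E. \<forall>z\<in>Ob E. \<forall>w\<in>Ob E. \<forall>g\<in>Hom E x y. \<forall>h\<in>Hom E y z. \<forall>l\<in>Hom E z w.
        cmp E x z w (cmp E x y z g h) l = cmp E x y w g (cmp E y z w h l)) \<and>
     (\<forall>x\<in>Ob E. \<forall>y\<in>Ob E. \<forall>g\<in>Hom E x y.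
        cmp E x x y (idm E x) g = g \<and> cmp E x y y g (idm E y) = g)"

definition hom_rel :: "('o, 'h::zero, 'k) klcat \<Rightarrow> ('o \<times> 'o) set" where
  "hom_rel E = {(a, b). a \<in> Ob E \<and> b \<in> Ob E \<and> Hom E a b \<noteq> {0}}"

definition prec :: "('o, 'h::zero, 'k) klcat \<Rightarrow> 'o \<Rightarrow> 'o \<Rightarrow> bool" where
  "prec E x y \<longleftrightarrow> (x, y) \<in> (hom_rel E)\<^sup>+"

definition locally_finite :: "('o, 'h::ab_group_add, 'k::field) klcat \<Rightarrow> bool" where
  "locally_finite E \<longleftrightarrow>
     (\<forall>x\<in>Ob E. \<forall>y\<in>Ob E. \<exists>B. finite B \<and> B \<subseteq> Hom E x y \<and> module.span (hsc E) B = Hom E x y) \<and>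
     (\<forall>x\<in>Ob E. \<forall>y\<in>Ob E. finite {z. prec E x z \<and> prec E z y})"

definition lower_finite :: "('o, 'h::ab_group_add, 'k::field) klcat \<Rightarrow> bool" where
  "lower_finite E \<longleftrightarrow> locally_finite E \<and> (\<forall>y\<in>Ob E. finite {x. prec E x y})"

text \<open>An element c of C_E is a finitely supported family c x y of linear
  functionals on Hom x y (extended by 0 outside Hom x y).\<close>

definition CE :: "('o, 'h::ab_group_add, 'k::field) klcat \<Rightarrow> ('o \<Rightarrow> 'o \<Rightarrow> 'h \<Rightarrow> 'k) set" where
  "CE E = {c.
     finite {(x, y). x \<in> Ob E \<and> y \<in> Ob E \<and> c x y \<noteq> (\<lambda>_. 0)} \<and>
     (\<forall>x y. x \<notin> Ob E \<or> y \<notin> Ob E \<longrightarrow> c x y = (\<lambda>_. 0)) \<and>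
     (\<forall>x\<in>Ob E. \<forall>y\<in>Ob E. lin_on (hsc E) (*) (Hom E x y) (c x y) \<and>
        (\<forall>v. v \<notin> Hom E x y \<longrightarrow> c x y v = 0))}"

definition cscale :: "'k::field \<Rightarrow> ('o \<Rightarrow> 'o \<Rightarrow> 'h \<Rightarrow> 'k) \<Rightarrow> ('o \<Rightarrow> 'o \<Rightarrow> 'h \<Rightarrow> 'k)" where
  "cscale a c = (\<lambda>x y v. a * c x y v)"

definition csupp :: "('o, 'h, 'k) klcat \<Rightarrow> ('o \<Rightarrow> 'o \<Rightarrow> 'h \<Rightarrow> 'k::zero) \<Rightarrow> ('o \<times> 'o) set" where
  "csupp E c = {(x, y). x \<in> Ob E \<and> y \<in> Ob E \<and> c x y \<noteq> (\<lambda>_. 0)}"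

definition coalg_eps :: "('o, 'h, 'k) klcat \<Rightarrow> ('o \<Rightarrow> 'o \<Rightarrow> 'h \<Rightarrow> 'k::field) \<Rightarrow> 'k" where
  "coalg_eps E c = (\<Sum>x\<in>{x\<in>Ob E. c x x \<noteq> (\<lambda>_. 0)}. c x x (idm E x))"

definition cinj :: "'o \<Rightarrow> 'o \<Rightarrow> ('h \<Rightarrow> 'k::zero) \<Rightarrow> ('o \<Rightarrow> 'o \<Rightarrow> 'h \<Rightarrow> 'k)" where
  "cinj x y \<phi> = (\<lambda>a b. if a = x \<and> b = y then \<phi> else (\<lambda>_. 0))"

definition hbasis :: "('o, 'h::ab_group_add, 'k::field) klcat \<Rightarrow> 'o \<Rightarrow> 'o \<Rightarrow> 'h set" where
  "hbasis E x y = (SOME B. B \<subseteq> Hom E x y \<and> \<not> module.dependent (hsc E) B \<and>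
                          module.span (hsc E) B = Hom E x y)"

definition hdual :: "('o, 'h::ab_group_add, 'k::field) klcat \<Rightarrow> 'o \<Rightarrow> 'o \<Rightarrow> 'h \<Rightarrow> 'h \<Rightarrow> 'k" where
  "hdual E x y b = (\<lambda>v. if v \<in> Hom E x y then module.representation (hsc E) (hbasis E x y) v b else 0)"

definition mid :: "('o, 'h::zero, 'k) klcat \<Rightarrow> 'o \<Rightarrow> 'o \<Rightarrow> 'o set" where
  "mid E x y = {z \<in> Ob E. Hom E x z \<noteq> {0} \<and> Hom E z y \<noteq> {0}}"

text \<open>For F : C \<rightarrow> Hom(C,P), corresponding to f : C \<otimes> C \<rightarrow> P via
  f(c' \<otimes> c'') = F c'' c', this is f \<circ> \<mu> where \<mu> is dual to composition:
  \<mu>(c) = \<Sum>_z \<Sum>_{i,j} c(h_j g_i) g_i^* \<otimes> h_j^*  (g_i basis of Hom(x,z),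
  h_j basis of Hom(z,y)), for c in C^{x,y}; extended linearly over the support.\<close>
definition comult_comp :: "('o, 'h::ab_group_add, 'k::field) klcat \<Rightarrow> ('k \<Rightarrow> 'p \<Rightarrow> 'p)
    \<Rightarrow> (('o \<Rightarrow> 'o \<Rightarrow> 'h \<Rightarrow> 'k) \<Rightarrow> ('o \<Rightarrow> 'o \<Rightarrow> 'h \<Rightarrow> 'k) \<Rightarrow> 'p::ab_group_add)
    \<Rightarrow> ('o \<Rightarrow> 'o \<Rightarrow> 'h \<Rightarrow> 'k) \<Rightarrow> 'p" where
  "comult_comp E sp F c =
     (\<Sum>(x, y)\<in>csupp E c. \<Sum>z\<in>mid E x y. \<Sum>b\<in>hbasis E x z. \<Sum>b'\<in>hbasis E z y.
        sp (c x y (cmp E x z y b b')) (F (cinj z y (hdual E z y b')) (cinj x z (hdual E x z b))))"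

definition extC :: "('o, 'h::ab_group_add, 'k::field) klcat \<Rightarrow> (('o \<Rightarrow> 'o \<Rightarrow> 'h \<Rightarrow> 'k) \<Rightarrow> 'p::zero)
    \<Rightarrow> ('o \<Rightarrow> 'o \<Rightarrow> 'h \<Rightarrow> 'k) \<Rightarrow> 'p" where
  "extC E g = (\<lambda>c. if c \<in> CE E then g c else 0)"

definition fscale :: "('k \<Rightarrow> 'p \<Rightarrow> 'p) \<Rightarrow> 'k \<Rightarrow> ('c \<Rightarrow> 'p) \<Rightarrow> ('c \<Rightarrow> 'p)" where
  "fscale sp a F = (\<lambda>c. sp a (F c))"

definition HomC :: "('o, 'h::ab_group_add, 'k::field) klcat \<Rightarrow> ('k \<Rightarrow> 'p \<Rightarrow> 'p) \<Rightarrow> 'p::ab_group_add set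
    \<Rightarrow> (('o \<Rightarrow> 'o \<Rightarrow> 'h \<Rightarrow> 'k) \<Rightarrow> 'p) set" where
  "HomC E sp P = {F. lin_on cscale sp (CE E) F \<and> F ` CE E \<subseteq> P \<and> (\<forall>c. c \<notin> CE E \<longrightarrow> F c = 0)}"

definition is_contra :: "('o, 'h::ab_group_add, 'k::field) klcat \<Rightarrow> ('k \<Rightarrow> 'p \<Rightarrow> 'p) \<Rightarrow> 'p::ab_group_add set
    \<Rightarrow> ((('o \<Rightarrow> 'o \<Rightarrow> 'h \<Rightarrow> 'k) \<Rightarrow> 'p) \<Rightarrow> 'p) \<Rightarrow> bool" where
  "is_contra E sp P \<pi> \<longleftrightarrow>
     vector_space sp \<and> module.subspace sp P \<and>
     (\<forall>F\<in>HomC E sp P. \<pi> F \<in> P) \<and>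
     lin_on (fscale sp) sp (HomC E sp P) \<pi> \<and>
     (\<forall>p\<in>P. \<pi> (extC E (\<lambda>c. sp (coalg_eps E c) p)) = p) \<and>
     (\<forall>f. (\<forall>c\<in>CE E. f c \<in> HomC E sp P) \<and> lin_on cscale (fscale sp) (CE E) f \<and>
          (\<forall>c. c \<notin> CE E \<longrightarrow> f c = 0) \<longrightarrow>
          \<pi> (extC E (\<lambda>c. \<pi> (f c))) = \<pi> (extC E (comult_comp E sp f)))"

definition contra_hom :: "('o, 'h::ab_group_add, 'k::field) klcat
    \<Rightarrow> ('k \<Rightarrow> 'p \<Rightarrow> 'p) \<Rightarrow> 'p::ab_group_add set \<Rightarrow> ((('o \<Rightarrow> 'o \<Rightarrow> 'h \<Rightarrow> 'k) \<Rightarrow> 'p) \<Rightarrow> 'p)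
    \<Rightarrow> ('k \<Rightarrow> 'q \<Rightarrow> 'q) \<Rightarrow> 'q::ab_group_add set \<Rightarrow> ((('o \<Rightarrow> 'o \<Rightarrow> 'h \<Rightarrow> 'k) \<Rightarrow> 'q) \<Rightarrow> 'q)
    \<Rightarrow> ('p \<Rightarrow> 'q) \<Rightarrow> bool" where
  "contra_hom E sp P \<pi> sq Q \<pi>' g \<longleftrightarrow>
     lin_on sp sq P g \<and> g ` P \<subseteq> Q \<and>
     (\<forall>F\<in>HomC E sp P. g (\<pi> F) = \<pi>' (extC E (g \<circ> F)))"

definition cact :: "('o, 'h::ab_group_add, 'k::field) klcat \<Rightarrow> ('k \<Rightarrow> 'p \<Rightarrow> 'p::ab_group_add)
    \<Rightarrow> ((('o \<Rightarrow> 'o \<Rightarrow> 'h \<Rightarrow> 'k) \<Rightarrow> 'p) \<Rightarrow> 'p) \<Rightarrow> (('o \<Rightarrow> 'o \<Rightarrow> 'h \<Rightarrow> 'k) \<Rightarrow> 'k) \<Rightarrow> 'p \<Rightarrow> 'p" where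
  "cact E sp \<pi> \<phi> p = \<pi> (extC E (\<lambda>c. sp (\<phi> c) p))"

definition e_fun :: "('o, 'h, 'k) klcat \<Rightarrow> 'o \<Rightarrow> ('o \<Rightarrow> 'o \<Rightarrow> 'h \<Rightarrow> 'k) \<Rightarrow> 'k" where
  "e_fun E x = (\<lambda>c. c x x (idm E x))"

definition ev_fun :: "'o \<Rightarrow> 'o \<Rightarrow> 'h \<Rightarrow> ('o \<Rightarrow> 'o \<Rightarrow> 'h \<Rightarrow> 'k) \<Rightarrow> 'k" where
  "ev_fun x y f = (\<lambda>c. c x y f)"

definition Theta_obj :: "('o, 'h::ab_group_add, 'k::field) klcat \<Rightarrow> ('k \<Rightarrow> 'p \<Rightarrow> 'p::ab_group_add)
    \<Rightarrow> 'p set \<Rightarrow> ((('o \<Rightarrow> 'o \<Rightarrow> 'h \<Rightarrow> 'k) \<Rightarrow> 'p) \<Rightarrow> 'p) \<Rightarrow> 'o \<Rightarrow> 'p set" where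
  "Theta_obj E sp P \<pi> x = (\<lambda>p. cact E sp \<pi> (e_fun E x) p) ` P"

definition Theta_act :: "('o, 'h::ab_group_add, 'k::field) klcat \<Rightarrow> ('k \<Rightarrow> 'p \<Rightarrow> 'p::ab_group_add)
    \<Rightarrow> ((('o \<Rightarrow> 'o \<Rightarrow> 'h \<Rightarrow> 'k) \<Rightarrow> 'p) \<Rightarrow> 'p) \<Rightarrow> 'o \<Rightarrow> 'o \<Rightarrow> 'h \<Rightarrow> 'p \<Rightarrow> 'p" where
  "Theta_act E sp \<pi> x y f p = cact E sp \<pi> (ev_fun x y f) p"

definition is_Emod :: "('o, 'h::ab_group_add, 'k::field) klcat \<Rightarrow> ('k \<Rightarrow> 'm \<Rightarrow> 'm)
    \<Rightarrow> ('o \<Rightarrow> 'm::ab_group_add set) \<Rightarrow> ('o \<Rightarrow> 'o \<Rightarrow> 'h \<Rightarrow> 'm \<Rightarrow> 'm) \<Rightarrow> bool" where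
  "is_Emod E sm M \<rho> \<longleftrightarrow>
     vector_space sm \<and>
     (\<forall>x\<in>Ob E. module.subspace sm (M x)) \<and>
     (\<forall>x\<in>Ob E. \<forall>y\<in>Ob E. \<forall>f\<in>Hom E x y. lin_on sm sm (M x) (\<rho> x y f) \<and> \<rho> x y f ` M x \<subseteq> M y) \<and>
     (\<forall>x\<in>Ob E. \<forall>y\<in>Ob E. \<forall>v\<in>M x. lin_on (hsc E) sm (Hom E x y) (\<lambda>f. \<rho> x y f v)) \<and>
     (\<forall>x\<in>Ob E. \<forall>v\<in>M x. \<rho> x x (idm E x) v = v) \<and>
     (\<forall>x\<in>Ob E. \<forall>y\<in>Ob E. \<forall>z\<in>Ob E. \<forall>g\<in>Hom E x y. \<forall>h\<in>Hom E y z. \<forall>v\<in>M x.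
        \<rho> x z (cmp E x y z g h) v = \<rho> y z h (\<rho> x y g v))"

definition Emod_hom :: "('o, 'h::ab_group_add, 'k::field) klcat
    \<Rightarrow> ('k \<Rightarrow> 'm \<Rightarrow> 'm) \<Rightarrow> ('o \<Rightarrow> 'm::ab_group_add set) \<Rightarrow> ('o \<Rightarrow> 'o \<Rightarrow> 'h \<Rightarrow> 'm \<Rightarrow> 'm)
    \<Rightarrow> ('k \<Rightarrow> 'n \<Rightarrow> 'n) \<Rightarrow> ('o \<Rightarrow> 'n::ab_group_add set) \<Rightarrow> ('o \<Rightarrow> 'o \<Rightarrow> 'h \<Rightarrow> 'n \<Rightarrow> 'n)
    \<Rightarrow> ('o \<Rightarrow> 'm \<Rightarrow> 'n) \<Rightarrow> bool" where
  "Emod_hom E sm M \<rho> sn N \<rho>' \<eta> \<longleftrightarrow>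
     (\<forall>x\<in>Ob E. lin_on sm sn (M x) (\<eta> x) \<and> \<eta> x ` M x \<subseteq> N x) \<and>
     (\<forall>x\<in>Ob E. \<forall>y\<in>Ob E. \<forall>f\<in>Hom E x y. \<forall>v\<in>M x. \<eta> y (\<rho> x y f v) = \<rho>' x y f (\<eta> x v))"

definition Emod_iso :: "('o, 'h::ab_group_add, 'k::field) klcat
    \<Rightarrow> ('k \<Rightarrow> 'm \<Rightarrow> 'm) \<Rightarrow> ('o \<Rightarrow> 'm::ab_group_add set) \<Rightarrow> ('o \<Rightarrow> 'o \<Rightarrow> 'h \<Rightarrow> 'm \<Rightarrow> 'm)
    \<Rightarrow> ('k \<Rightarrow> 'n \<Rightarrow> 'n) \<Rightarrow> ('o \<Rightarrow> 'n::ab_group_add set) \<Rightarrow> ('o \<Rightarrow> 'o \<Rightarrow> 'h \<Rightarrow> 'n \<Rightarrow> 'n) \<Rightarrow> bool" where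
  "Emod_iso E sm M \<rho> sn N \<rho>' \<longleftrightarrow>
     (\<exists>\<eta> \<eta>'. Emod_hom E sm M \<rho> sn N \<rho>' \<eta> \<and> Emod_hom E sn N \<rho>' sm M \<rho> \<eta>' \<and>
        (\<forall>x\<in>Ob E. (\<forall>v\<in>M x. \<eta>' x (\<eta> x v) = v) \<and> (\<forall>w\<in>N x. \<eta> x (\<eta>' x w) = w)))"

definition pscale :: "('k \<Rightarrow> 'm \<Rightarrow> 'm) \<Rightarrow> 'k \<Rightarrow> ('o \<Rightarrow> 'm) \<Rightarrow> ('o \<Rightarrow> 'm)" where
  "pscale sm a f = (\<lambda>x. sm a (f x))"

end

theory Submission
  imports Defs
begin

(*
  Write phi.p for the action of a functional phi on C_E on a contramodule P, e_x for the
  counit at x and ev_f for evaluation at f.  Contraassociativity makes the evaluation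
  functionals compose like the morphisms of E: ev_h.(ev_g.p) = ev_(h g).p, and the result
  is 0 when g and h are not composable.  Hence the subspaces e_x.P form an E-module.
  Contraassociativity and the counit law give p = pi(c |-> sum_x c(id_x) e_x.p), so p is
  determined by its components e_x.p; conversely every family (q_x) with q_x in e_x.P is
  the family of components of pi(c |-> sum_x c(id_x) q_x).  So P is the product of the
  e_x.P, and Theta is fully faithful.  Lower finiteness makes
  e_y.pi(F) = sum over a and beta of ev_beta.F(dual beta) a finite sum, where a ranges over
  the objects with Hom(a,y) nonzero and beta over a basis of Hom(a,y).  For an E-module M
  the same formula defines a contraaction on the product of the M(x), and Theta of this
  contramodule is M.
*)

lemma lin_on_add: "lin_on s1 s2 A f \<Longrightarrow> u \<in> A \<Longrightarrow> v \<in> A \<Longrightarrow> f (u + v) = f u + f v"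
  unfolding lin_on_def by blast

lemma lin_on_scale: "lin_on s1 s2 A f \<Longrightarrow> u \<in> A \<Longrightarrow> f (s1 a u) = s2 a (f u)"
  unfolding lin_on_def by blast

lemma lin_on_zero:
  assumes "lin_on s1 s2 A f" "0 \<in> A" shows "f 0 = 0"
  using lin_on_add[OF assms(1,2,2)] by simp

lemma lin_on_sum:
  assumes f: "lin_on s1 s2 A f" and A: "0 \<in> A" "\<And>u v. u \<in> A \<Longrightarrow> v \<in> A \<Longrightarrow> u + v \<in> A"
    and v: "\<And>i. i \<in> I \<Longrightarrow> v i \<in> A"
  shows "f (sum v I) = (\<Sum>i\<in>I. f (v i))"
proof -
  have "sum v I \<in> A \<and> f (sum v I) = (\<Sum>i\<in>I. f (v i))"
    using v
  proof (induction I rule: infinite_finite_induct)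
    case (insert x F)
    then show ?case using A(2) lin_on_add[OF f] by simp
  qed (use A(1) lin_on_zero[OF f A(1)] in simp_all)
  then show ?thesis ..
qed

lemma lin_on_comp:
  "lin_on s1 s2 A f \<Longrightarrow> f ` A \<subseteq> B \<Longrightarrow> lin_on s2 s3 B g \<Longrightarrow> lin_on s1 s3 A (\<lambda>v. g (f v))"
  unfolding lin_on_def by (simp add: image_subset_iff)

lemma vector_space_fscale: assumes "vector_space s" shows "vector_space (fscale s)"
proof -
  interpret vector_space s by fact
  show ?thesis
    unfolding vector_space_def fscale_def by (simp add: fun_eq_iff scale_right_distrib scale_left_distrib)
qed

lemma vector_space_pscale: assumes "vector_space s" shows "vector_space (pscale s)"
proof -
  interpret vector_space s by fact
  show ?thesis
    unfolding vector_space_def pscale_def by (simp add: fun_eq_iff scale_right_distrib scale_left_distrib)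
qed

lemma sum_fun: "(\<Sum>i\<in>I. F i) = (\<lambda>x. \<Sum>i\<in>I. F i x)"
  by (induction I rule: infinite_finite_induct) (simp_all add: fun_eq_iff)

definition lower_objs :: "('o, 'h::zero, 'k) klcat \<Rightarrow> 'o \<Rightarrow> 'o set" where
  "lower_objs E y = {a \<in> Ob E. Hom E a y \<noteq> {0}}"

definition below :: "('o, 'h::zero, 'k) klcat \<Rightarrow> 'o \<Rightarrow> 'o set" where
  "below E y = {a \<in> Ob E. prec E a y}"

locale lower_finite_kcat =
  fixes E :: "('o, 'h::ab_group_add, 'k::field) klcat"
  assumes klinear: "klinear_cat E" and lower_fin: "lower_finite E"
begin

sublocale H: vector_space "hsc E"
  using klinear unfolding klinear_cat_def by simp

lemma Hom_subspace: "x \<in> Ob E \<Longrightarrow> y \<in> Ob E \<Longrightarrow> H.subspace (Hom E x y)"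
  using klinear unfolding klinear_cat_def by simp

lemma zero_in_Hom: "x \<in> Ob E \<Longrightarrow> y \<in> Ob E \<Longrightarrow> 0 \<in> Hom E x y"
  using Hom_subspace H.subspace_0 by blast

lemma Hom_add: "x \<in> Ob E \<Longrightarrow> y \<in> Ob E \<Longrightarrow> u \<in> Hom E x y \<Longrightarrow> v \<in> Hom E x y \<Longrightarrow> u + v \<in> Hom E x y"
  using Hom_subspace H.subspace_add by blast

lemma Hom_scale: "x \<in> Ob E \<Longrightarrow> y \<in> Ob E \<Longrightarrow> u \<in> Hom E x y \<Longrightarrow> hsc E a u \<in> Hom E x y"
  using Hom_subspace H.subspace_scale by blast

lemma idm_in_Hom: "x \<in> Ob E \<Longrightarrow> idm E x \<in> Hom E x x"
  using klinear unfolding klinear_cat_def by simp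

lemma idm_nonzero: "x \<in> Ob E \<Longrightarrow> idm E x \<noteq> 0"
  using klinear unfolding klinear_cat_def by simp

lemma cmp_in_Hom: "x \<in> Ob E \<Longrightarrow> y \<in> Ob E \<Longrightarrow> z \<in> Ob E \<Longrightarrow> g \<in> Hom E x y \<Longrightarrow> h \<in> Hom E y z
   \<Longrightarrow> cmp E x y z g h \<in> Hom E x z"
  using klinear unfolding klinear_cat_def by simp

lemma cmp_linear_right: "x \<in> Ob E \<Longrightarrow> y \<in> Ob E \<Longrightarrow> z \<in> Ob E \<Longrightarrow> g \<in> Hom E x y
   \<Longrightarrow> lin_on (hsc E) (hsc E) (Hom E y z) (cmp E x y z g)"
  using klinear unfolding klinear_cat_def by simp

lemma cmp_linear_left: "x \<in> Ob E \<Longrightarrow> y \<in> Ob E \<Longrightarrow> z \<in> Ob E \<Longrightarrow> h \<in> Hom E y z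
   \<Longrightarrow> lin_on (hsc E) (hsc E) (Hom E x y) (\<lambda>g. cmp E x y z g h)"
  using klinear unfolding klinear_cat_def by simp

lemma cmp_idm_left: "x \<in> Ob E \<Longrightarrow> y \<in> Ob E \<Longrightarrow> g \<in> Hom E x y \<Longrightarrow> cmp E x x y (idm E x) g = g"
  using klinear unfolding klinear_cat_def by simp

lemma cmp_idm_right: "x \<in> Ob E \<Longrightarrow> y \<in> Ob E \<Longrightarrow> g \<in> Hom E x y \<Longrightarrow> cmp E x y y g (idm E y) = g"
  using klinear unfolding klinear_cat_def by simp

lemma cmp_zero_right: "x \<in> Ob E \<Longrightarrow> y \<in> Ob E \<Longrightarrow> z \<in> Ob E \<Longrightarrow> g \<in> Hom E x y \<Longrightarrow> cmp E x y z g 0 = 0"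
  using lin_on_zero[OF cmp_linear_right zero_in_Hom] by blast

lemma prec_if_Hom_nonzero: "x \<in> Ob E \<Longrightarrow> y \<in> Ob E \<Longrightarrow> Hom E x y \<noteq> {0} \<Longrightarrow> prec E x y"
  unfolding prec_def hom_rel_def by auto

lemma finite_lower_objs: "y \<in> Ob E \<Longrightarrow> finite (lower_objs E y)"
proof -
  assume y: "y \<in> Ob E"
  have "finite {x. prec E x y}" using lower_fin y unfolding lower_finite_def by blast
  moreover have "lower_objs E y \<subseteq> {x. prec E x y}"
    using prec_if_Hom_nonzero y unfolding lower_objs_def by blast
  ultimately show ?thesis by (rule finite_subset[rotated])
qed

lemma finite_below: "y \<in> Ob E \<Longrightarrow> finite (below E y)"
  using lower_fin unfolding lower_finite_def below_def by (simp add: Collect_conj_eq)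

lemma below_subset: "below E y \<subseteq> Ob E"
  unfolding below_def by blast

lemma lower_objs_subset_below: "y \<in> Ob E \<Longrightarrow> lower_objs E y \<subseteq> below E y"
  unfolding lower_objs_def below_def using prec_if_Hom_nonzero by blast

lemma lower_objs_subset_below_trans: "z \<in> below E y \<Longrightarrow> lower_objs E z \<subseteq> below E y"
  unfolding lower_objs_def below_def prec_def
  using prec_if_Hom_nonzero[unfolded prec_def] by (blast intro: trancl_trans)

lemma mid_subset_below: "y \<in> Ob E \<Longrightarrow> mid E w y \<subseteq> below E y"
  unfolding mid_def below_def using prec_if_Hom_nonzero by blast

lemma mid_iff: "m \<in> mid E x w \<longleftrightarrow> m \<in> Ob E \<and> Hom E x m \<noteq> {0} \<and> Hom E m w \<noteq> {0}"
  unfolding mid_def by simp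

lemma finite_mid: assumes "x \<in> Ob E" "w \<in> Ob E" shows "finite (mid E x w)"
proof -
  have "finite {z. prec E x z \<and> prec E z w}"
    using lower_fin assms unfolding lower_finite_def locally_finite_def by blast
  moreover have "mid E x w \<subseteq> {z. prec E x z \<and> prec E z w}"
    using assms prec_if_Hom_nonzero unfolding mid_def by blast
  ultimately show ?thesis by (rule finite_subset[rotated])
qed

lemma self_in_mid: "x \<in> Ob E \<Longrightarrow> x \<in> mid E x x"
  unfolding mid_iff using idm_in_Hom idm_nonzero by blast

lemma hbasis_basis: assumes "x \<in> Ob E" "y \<in> Ob E"
  shows "hbasis E x y \<subseteq> Hom E x y" "H.independent (hbasis E x y)" "H.span (hbasis E x y) = Hom E x y"
proof -
  obtain B where B: "B \<subseteq> Hom E x y" "H.independent B" "Hom E x y \<subseteq> H.span B"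
    by (rule H.basis_exists[of "Hom E x y"])
  moreover have "H.span B \<subseteq> Hom E x y"
    by (rule H.span_minimal[OF B(1) Hom_subspace[OF assms]])
  ultimately have "\<exists>B. B \<subseteq> Hom E x y \<and> \<not> H.dependent B \<and> H.span B = Hom E x y"
    by blast
  from someI_ex[OF this, folded hbasis_def]
  show "hbasis E x y \<subseteq> Hom E x y" "H.independent (hbasis E x y)" "H.span (hbasis E x y) = Hom E x y"
    by simp_all
qed

lemma hbasis_in_Hom: "x \<in> Ob E \<Longrightarrow> y \<in> Ob E \<Longrightarrow> b \<in> hbasis E x y \<Longrightarrow> b \<in> Hom E x y"
  using hbasis_basis(1) by blast

lemma finite_hbasis: assumes "x \<in> Ob E" "y \<in> Ob E" shows "finite (hbasis E x y)"
proof -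
  obtain B where B: "finite B" "H.span B = Hom E x y"
    using lower_fin assms unfolding lower_finite_def locally_finite_def by blast
  have "hbasis E x y \<subseteq> H.span B" using B(2) hbasis_basis(1)[OF assms] by simp
  from H.independent_span_bound[OF B(1) hbasis_basis(2)[OF assms] this] show ?thesis by simp
qed

lemma hbasis_empty: assumes "x \<in> Ob E" "y \<in> Ob E" "Hom E x y = {0}" shows "hbasis E x y = {}"
proof -
  have "0 \<notin> hbasis E x y" using hbasis_basis(2)[OF assms(1,2)] H.dependent_zero by blast
  then show ?thesis using hbasis_basis(1)[OF assms(1,2)] assms(3) by auto
qed

lemma hdual_outside: "v \<notin> Hom E x y \<Longrightarrow> hdual E x y b v = 0"
  unfolding hdual_def by simp

lemma hdual_linear: assumes "x \<in> Ob E" "y \<in> Ob E"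
  shows "lin_on (hsc E) (*) (Hom E x y) (hdual E x y b)"
  unfolding lin_on_def
proof (intro conjI ballI allI)
  note h = hbasis_basis[OF assms]
  have sp: "v \<in> H.span (hbasis E x y)" if "v \<in> Hom E x y" for v using h(3) that by simp
  fix u v assume u: "u \<in> Hom E x y" and v: "v \<in> Hom E x y"
  show "hdual E x y b (u + v) = hdual E x y b u + hdual E x y b v"
    unfolding hdual_def using u v Hom_add[OF assms u v] H.representation_add[OF h(2) sp[OF v] sp[OF u]]
    by simp
next
  note h = hbasis_basis[OF assms]
  have sp: "v \<in> H.span (hbasis E x y)" if "v \<in> Hom E x y" for v using h(3) that by simp
  fix a u assume u: "u \<in> Hom E x y"
  show "hdual E x y b (hsc E a u) = a * hdual E x y b u"
    unfolding hdual_def using u Hom_scale[OF assms u] H.representation_scale[OF h(2) sp[OF u]] by simp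
qed

lemma hdual_on_hbasis: assumes "x \<in> Ob E" "y \<in> Ob E" "b \<in> hbasis E x y" "b' \<in> hbasis E x y"
  shows "hdual E x y b b' = (if b = b' then 1 else 0)"
  using H.representation_basis[OF hbasis_basis(2)[OF assms(1,2)] assms(4)]
    hbasis_in_Hom[OF assms(1,2,4)] unfolding hdual_def by simp

lemma hbasis_expansion: assumes "x \<in> Ob E" "y \<in> Ob E" "v \<in> Hom E x y"
  shows "(\<Sum>b\<in>hbasis E x y. hsc E (hdual E x y b v) b) = v"
  unfolding hdual_def using assms(3)
  by simp (rule H.sum_representation_eq;
      use hbasis_basis[OF assms(1,2)] assms(3) finite_hbasis[OF assms(1,2)] in auto)

lemma linear_form_expansion: assumes "x \<in> Ob E" "y \<in> Ob E" "v \<in> Hom E x y"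
    and l: "lin_on (hsc E) (*) (Hom E x y) l"
  shows "(\<Sum>b\<in>hbasis E x y. hdual E x y b v * l b) = l v"
proof -
  have b: "hsc E (hdual E x y b v) b \<in> Hom E x y" if "b \<in> hbasis E x y" for b
    using Hom_scale[OF assms(1,2) hbasis_in_Hom[OF assms(1,2) that]] .
  have "l v = l (\<Sum>b\<in>hbasis E x y. hsc E (hdual E x y b v) b)"
    using hbasis_expansion[OF assms(1-3)] by simp
  also have "\<dots> = (\<Sum>b\<in>hbasis E x y. l (hsc E (hdual E x y b v) b))"
    by (rule lin_on_sum[OF l zero_in_Hom[OF assms(1,2)] Hom_add[OF assms(1,2)] b])
  also have "\<dots> = (\<Sum>b\<in>hbasis E x y. hdual E x y b v * l b)"
    by (rule sum.cong) (use hbasis_in_Hom[OF assms(1,2)] lin_on_scale[OF l] in auto)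
  finally show ?thesis by simp
qed

end

definition clinear :: "('o, 'h::ab_group_add, 'k::field) klcat \<Rightarrow> (('o \<Rightarrow> 'o \<Rightarrow> 'h \<Rightarrow> 'k) \<Rightarrow> 'k) \<Rightarrow> bool" where
  "clinear E \<phi> \<longleftrightarrow> lin_on cscale (*) (CE E) \<phi>"

definition rank_one :: "('o, 'h::ab_group_add, 'k::field) klcat \<Rightarrow> ('k \<Rightarrow> 'p \<Rightarrow> 'p::ab_group_add)
    \<Rightarrow> (('o \<Rightarrow> 'o \<Rightarrow> 'h \<Rightarrow> 'k) \<Rightarrow> 'k) \<Rightarrow> 'p \<Rightarrow> ('o \<Rightarrow> 'o \<Rightarrow> 'h \<Rightarrow> 'k) \<Rightarrow> 'p" where
  "rank_one E sp \<phi> p = extC E (\<lambda>c. sp (\<phi> c) p)"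

definition diag_supp :: "('o, 'h::zero, 'k) klcat \<Rightarrow> ('o \<Rightarrow> 'o \<Rightarrow> 'h \<Rightarrow> 'k::zero) \<Rightarrow> 'o set" where
  "diag_supp E c = {x \<in> Ob E. c x x \<noteq> (\<lambda>_. 0)}"

definition diag_hom :: "('o, 'h::ab_group_add, 'k::field) klcat \<Rightarrow> ('k \<Rightarrow> 'a \<Rightarrow> 'a) \<Rightarrow> ('o \<Rightarrow> 'a)
    \<Rightarrow> ('o \<Rightarrow> 'o \<Rightarrow> 'h \<Rightarrow> 'k) \<Rightarrow> 'a::ab_group_add" where
  "diag_hom E s q = extC E (\<lambda>c. \<Sum>x\<in>diag_supp E c. s (c x x (idm E x)) (q x))"

lemma cact_rank_one: "cact E sp \<pi> \<phi> p = \<pi> (rank_one E sp \<phi> p)"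
  unfolding cact_def rank_one_def ..

lemma clinear_add: "clinear E \<phi> \<Longrightarrow> clinear E \<psi> \<Longrightarrow> clinear E (\<lambda>c. \<phi> c + \<psi> c)"
  unfolding clinear_def lin_on_def by (simp add: algebra_simps)

lemma clinear_scale: "clinear E \<phi> \<Longrightarrow> clinear E (\<lambda>c. a * \<phi> c)"
  unfolding clinear_def lin_on_def by (simp add: algebra_simps)

lemma clinear_ev_fun: "clinear E (ev_fun x y f)"
  unfolding clinear_def lin_on_def ev_fun_def cscale_def by simp

lemma clinear_e_fun: "clinear E (e_fun E x)"
  unfolding clinear_def lin_on_def e_fun_def cscale_def by simp

lemma e_fun_eq_ev_fun: "e_fun E x = ev_fun x x (idm E x)"
  unfolding e_fun_def ev_fun_def ..

lemma ev_fun_cinj: "ev_fun x w g (cinj a y \<psi>) = (if a = x \<and> y = w then \<psi> g else 0)"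
  by (simp add: ev_fun_def cinj_def)

lemma extC_cong: "(\<And>c. c \<in> CE E \<Longrightarrow> f c = g c) \<Longrightarrow> extC E f = extC E g"
  unfolding extC_def by auto

lemma extC_zero: "extC E (\<lambda>c. 0) = (\<lambda>_. 0)"
  unfolding extC_def by simp

lemma rank_one_apply: "c \<in> CE E \<Longrightarrow> rank_one E sp \<phi> p c = sp (\<phi> c) p"
  unfolding rank_one_def extC_def by simp

lemma rank_one_outside: "c \<notin> CE E \<Longrightarrow> rank_one E sp \<phi> p c = 0"
  unfolding rank_one_def extC_def by simp

context lower_finite_kcat begin

lemma CE_D:
  assumes "c \<in> CE E"
  shows "finite (csupp E c)"
    "x \<notin> Ob E \<or> y \<notin> Ob E \<Longrightarrow> c x y = (\<lambda>_. 0)"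
    "x \<in> Ob E \<Longrightarrow> y \<in> Ob E \<Longrightarrow> lin_on (hsc E) (*) (Hom E x y) (c x y)"
    "x \<in> Ob E \<Longrightarrow> y \<in> Ob E \<Longrightarrow> v \<notin> Hom E x y \<Longrightarrow> c x y v = 0"
  using assms unfolding CE_def csupp_def by auto

lemma CE_I:
  assumes "finite (csupp E c)"
    "\<And>x y. x \<notin> Ob E \<or> y \<notin> Ob E \<Longrightarrow> c x y = (\<lambda>_. 0)"
    "\<And>x y. x \<in> Ob E \<Longrightarrow> y \<in> Ob E \<Longrightarrow> lin_on (hsc E) (*) (Hom E x y) (c x y)"
    "\<And>x y v. x \<in> Ob E \<Longrightarrow> y \<in> Ob E \<Longrightarrow> v \<notin> Hom E x y \<Longrightarrow> c x y v = 0"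
  shows "c \<in> CE E"
  using assms unfolding CE_def csupp_def by auto

lemma CE_apply_zero: "c \<in> CE E \<Longrightarrow> c x y 0 = 0"
  by (cases "x \<in> Ob E \<and> y \<in> Ob E") (use lin_on_zero[OF CE_D(3) zero_in_Hom] CE_D(2) in auto)

lemma CE_cmp_linear_left:
  assumes "c \<in> CE E" "x \<in> Ob E" "y \<in> Ob E" "z \<in> Ob E" "h \<in> Hom E y z"
  shows "lin_on (hsc E) (*) (Hom E x y) (\<lambda>v. c x z (cmp E x y z v h))"
  by (rule lin_on_comp[OF cmp_linear_left[OF assms(2-5)] _ CE_D(3)[OF assms(1,2,4)]])
    (use cmp_in_Hom[OF assms(2-4) _ assms(5)] in blast)

lemma CE_cmp_linear_right:
  assumes "c \<in> CE E" "x \<in> Ob E" "y \<in> Ob E" "z \<in> Ob E" "g \<in> Hom E x y"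
  shows "lin_on (hsc E) (*) (Hom E y z) (\<lambda>v. c x z (cmp E x y z g v))"
  by (rule lin_on_comp[OF cmp_linear_right[OF assms(2-5)] _ CE_D(3)[OF assms(1,2,4)]])
    (use cmp_in_Hom[OF assms(2-4) assms(5)] in blast)

lemma CE_add: assumes "u \<in> CE E" "v \<in> CE E" shows "u + v \<in> CE E"
proof (rule CE_I)
  have "csupp E (u + v) \<subseteq> csupp E u \<union> csupp E v"
    unfolding csupp_def by (auto simp: plus_fun_def)
  then show "finite (csupp E (u + v))" using CE_D(1)[OF assms(1)] CE_D(1)[OF assms(2)]
    by (meson finite_UnI finite_subset)
  show "(u + v) x y = (\<lambda>_. 0)" if "x \<notin> Ob E \<or> y \<notin> Ob E" for x y
    using CE_D(2)[OF assms(1) that] CE_D(2)[OF assms(2) that] by (simp add: plus_fun_def)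
  show "lin_on (hsc E) (*) (Hom E x y) ((u + v) x y)" if "x \<in> Ob E" "y \<in> Ob E" for x y
    using CE_D(3)[OF assms(1) that] CE_D(3)[OF assms(2) that]
    unfolding lin_on_def by (simp add: plus_fun_def algebra_simps)
  show "(u + v) x y w = 0" if "x \<in> Ob E" "y \<in> Ob E" "w \<notin> Hom E x y" for x y w
    using CE_D(4)[OF assms(1) that] CE_D(4)[OF assms(2) that] by (simp add: plus_fun_def)
qed

lemma CE_scale: assumes "u \<in> CE E" shows "cscale a u \<in> CE E"
proof (rule CE_I)
  have "csupp E (cscale a u) \<subseteq> csupp E u"
    unfolding csupp_def cscale_def by auto
  then show "finite (csupp E (cscale a u))" using CE_D(1)[OF assms(1)]
    by (meson finite_subset)
  show "(cscale a u) x y = (\<lambda>_. 0)" if "x \<notin> Ob E \<or> y \<notin> Ob E" for x y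
    using CE_D(2)[OF assms(1) that] by (simp add: cscale_def)
  show "lin_on (hsc E) (*) (Hom E x y) ((cscale a u) x y)" if "x \<in> Ob E" "y \<in> Ob E" for x y
    using CE_D(3)[OF assms(1) that]
    unfolding lin_on_def by (simp add: cscale_def algebra_simps)
  show "(cscale a u) x y w = 0" if "x \<in> Ob E" "y \<in> Ob E" "w \<notin> Hom E x y" for x y w
    using CE_D(4)[OF assms(1) that] by (simp add: cscale_def)
qed

lemma cinj_in_CE:
  assumes "x \<in> Ob E" "y \<in> Ob E" "lin_on (hsc E) (*) (Hom E x y) \<phi>" "\<And>v. v \<notin> Hom E x y \<Longrightarrow> \<phi> v = 0"
  shows "cinj x y \<phi> \<in> CE E"
proof (rule CE_I)
  have "csupp E (cinj x y \<phi>) \<subseteq> {(x, y)}" unfolding csupp_def cinj_def by auto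
  then show "finite (csupp E (cinj x y \<phi>))" by (rule finite_subset) simp
qed (use assms in \<open>auto simp: cinj_def lin_on_def\<close>)

lemma cinj_hdual_in_CE: "x \<in> Ob E \<Longrightarrow> y \<in> Ob E \<Longrightarrow> cinj x y (hdual E x y b) \<in> CE E"
  by (rule cinj_in_CE) (auto intro: hdual_linear hdual_outside)

lemma csupp_in_Ob: "(x, w) \<in> csupp E c \<Longrightarrow> x \<in> Ob E \<and> w \<in> Ob E"
  unfolding csupp_def by simp

lemma notin_csupp_zero: "x \<in> Ob E \<Longrightarrow> w \<in> Ob E \<Longrightarrow> (x, w) \<notin> csupp E c \<Longrightarrow> c x w v = 0"
  unfolding csupp_def by (simp add: fun_eq_iff)

lemma csupp_cinj_hdual: assumes "w \<in> Ob E" "y \<in> Ob E" "\<delta> \<in> hbasis E w y"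
  shows "csupp E (cinj w y (hdual E w y \<delta>)) = {(w, y)}"
proof -
  have "hdual E w y \<delta> \<delta> = 1" using hdual_on_hbasis[OF assms assms(3)] by simp
  then have "hdual E w y \<delta> \<noteq> (\<lambda>_. 0)" by (metis one_neq_zero)
  then show ?thesis unfolding csupp_def cinj_def using assms(1,2) by auto
qed

lemma diag_supp_subset: "diag_supp E c \<subseteq> Ob E"
  unfolding diag_supp_def by auto

lemma diag_supp_cinj: "diag_supp E (cinj m w \<phi>) \<subseteq> {m}"
  unfolding diag_supp_def cinj_def by auto

lemma finite_diag_supp: assumes "c \<in> CE E" shows "finite (diag_supp E c)"
proof -
  have "diag_supp E c \<subseteq> fst ` csupp E c" unfolding diag_supp_def csupp_def by force
  then show ?thesis using CE_D(1)[OF assms] by (meson finite_imageI finite_subset)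
qed

lemma diag_supp_sum_extend:
  fixes g :: "'k \<Rightarrow> 'o \<Rightarrow> 'a::comm_monoid_add"
  assumes c: "c \<in> CE E" and T: "finite T" "diag_supp E c \<subseteq> T" and g0: "\<And>x. g 0 x = 0"
  shows "(\<Sum>x\<in>diag_supp E c. g (c x x (idm E x)) x) = (\<Sum>x\<in>T. g (c x x (idm E x)) x)"
proof (rule sum.mono_neutral_left[OF T], rule ballI)
  fix x assume x: "x \<in> T - diag_supp E c"
  have "c x x = (\<lambda>_. 0)"
    using x CE_D(2)[OF c, of x x] unfolding diag_supp_def by blast
  then show "g (c x x (idm E x)) x = 0" using g0 by simp
qed

lemma coalg_eps_diag_supp: "coalg_eps E c = (\<Sum>x\<in>diag_supp E c. c x x (idm E x))"
  unfolding coalg_eps_def diag_supp_def ..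

lemma diag_hom_eq_sum:
  assumes c: "c \<in> CE E" and T: "finite T" "diag_supp E c \<subseteq> T" and s0: "\<And>v. s 0 v = 0"
  shows "diag_hom E s q c = (\<Sum>x\<in>T. s (c x x (idm E x)) (q x))"
  unfolding diag_hom_def extC_def using c diag_supp_sum_extend[OF c T, of "\<lambda>k x. s k (q x)"] s0 by simp

lemma diag_hom_cinj_hdual:
  assumes "a \<in> Ob E" "y \<in> Ob E" "\<And>v. s 0 v = 0"
  shows "diag_hom E s q (cinj a y (hdual E a y \<beta>)) = s (if a = y then hdual E a y \<beta> (idm E a) else 0) (q a)"
proof -
  have "diag_hom E s q (cinj a y (hdual E a y \<beta>))
      = (\<Sum>x\<in>{a}. s (cinj a y (hdual E a y \<beta>) x x (idm E x)) (q x))"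
    by (rule diag_hom_eq_sum[OF cinj_hdual_in_CE[OF assms(1,2)]]) (simp_all add: diag_supp_cinj assms(3))
  then show ?thesis by (simp add: cinj_def)
qed

lemma diag_hom_linear: assumes "vector_space s" shows "lin_on cscale s (CE E) (diag_hom E s q)"
  unfolding lin_on_def
proof (intro conjI ballI allI)
  interpret vector_space s by fact
  fix u v assume u: "u \<in> CE E" and v: "v \<in> CE E"
  define T where "T = diag_supp E u \<union> diag_supp E v \<union> diag_supp E (u + v)"
  have T: "finite T" using finite_diag_supp u v CE_add[OF u v] unfolding T_def by blast
  have Tu: "diag_supp E u \<subseteq> T" and Tv: "diag_supp E v \<subseteq> T" and Tuv: "diag_supp E (u + v) \<subseteq> T"
    unfolding T_def by auto
  have "diag_hom E s q (u + v) = (\<Sum>x\<in>T. s ((u + v) x x (idm E x)) (q x))"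
    by (rule diag_hom_eq_sum[where s = s, OF CE_add[OF u v] T Tuv scale_zero_left])
  also have "\<dots> = (\<Sum>x\<in>T. s (u x x (idm E x)) (q x)) + (\<Sum>x\<in>T. s (v x x (idm E x)) (q x))"
    by (simp add: scale_left_distrib sum.distrib)
  also have "\<dots> = diag_hom E s q u + diag_hom E s q v"
    using diag_hom_eq_sum[where s = s, OF u T Tu scale_zero_left]
      diag_hom_eq_sum[where s = s, OF v T Tv scale_zero_left] by simp
  finally show "diag_hom E s q (u + v) = diag_hom E s q u + diag_hom E s q v" .
next
  interpret vector_space s by fact
  fix a u assume u: "u \<in> CE E"
  define T where "T = diag_supp E u \<union> diag_supp E (cscale a u)"
  have T: "finite T" using finite_diag_supp u CE_scale[OF u] unfolding T_def by blast
  have Tu: "diag_supp E u \<subseteq> T" and Tau: "diag_supp E (cscale a u) \<subseteq> T" unfolding T_def by auto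
  have "diag_hom E s q (cscale a u) = (\<Sum>x\<in>T. s (cscale a u x x (idm E x)) (q x))"
    by (rule diag_hom_eq_sum[where s = s, OF CE_scale[OF u] T Tau scale_zero_left])
  also have "\<dots> = s a (\<Sum>x\<in>T. s (u x x (idm E x)) (q x))"
    by (simp add: cscale_def scale_sum_right)
  also have "\<dots> = s a (diag_hom E s q u)"
    using diag_hom_eq_sum[where s = s, OF u T Tu scale_zero_left] by simp
  finally show "diag_hom E s q (cscale a u) = s a (diag_hom E s q u)" .
qed

lemma coalg_eps_cinj_hdual: assumes "a \<in> Ob E" "y \<in> Ob E"
  shows "coalg_eps E (cinj a y (hdual E a y \<beta>)) = (if a = y then hdual E a y \<beta> (idm E a) else 0)"
proof -
  have "coalg_eps E (cinj a y (hdual E a y \<beta>)) = (\<Sum>x\<in>{a}. cinj a y (hdual E a y \<beta>) x x (idm E x))"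
    unfolding coalg_eps_diag_supp
    using diag_supp_sum_extend[OF cinj_hdual_in_CE[OF assms], where T = "{a}" and g = "\<lambda>k x. k"]
      diag_supp_cinj by simp
  then show ?thesis by (simp add: cinj_def)
qed

lemma csupp_diag_sum:
  assumes c: "c \<in> CE E"
  shows "(\<Sum>(x, w)\<in>csupp E c. if x = w then g x else 0) = (\<Sum>x\<in>diag_supp E c. g x)"
proof -
  have "(\<Sum>(x, w)\<in>csupp E c. if x = w then g x else 0)
      = (\<Sum>xw\<in>csupp E c. if fst xw = snd xw then g (fst xw) else 0)"
    by (simp add: case_prod_beta)
  also have "\<dots> = (\<Sum>xw\<in>{xw\<in>csupp E c. fst xw = snd xw}. g (fst xw))"
    by (rule sum.inter_filter[symmetric, OF CE_D(1)[OF c]])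
  also have "{xw\<in>csupp E c. fst xw = snd xw} = (\<lambda>x. (x, x)) ` diag_supp E c"
    unfolding diag_supp_def csupp_def by auto
  also have "(\<Sum>xw\<in>(\<lambda>x. (x, x)) ` diag_supp E c. g (fst xw)) = (\<Sum>x\<in>diag_supp E c. g x)"
    by (subst sum.reindex) (auto simp: inj_on_def)
  finally show ?thesis .
qed

end

locale contramodule = lower_finite_kcat E for E :: "('o, 'h::ab_group_add, 'k::field) klcat" +
  fixes sp :: "'k \<Rightarrow> 'p::ab_group_add \<Rightarrow> 'p" and P :: "'p set" and \<pi> :: "(('o \<Rightarrow> 'o \<Rightarrow> 'h \<Rightarrow> 'k) \<Rightarrow> 'p) \<Rightarrow> 'p"
  assumes contra: "is_contra E sp P \<pi>"
begin

sublocale V: vector_space sp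
  using contra unfolding is_contra_def by simp

lemma P_subspace: "V.subspace P"
  using contra unfolding is_contra_def by simp

lemma P_zero: "0 \<in> P" using V.subspace_0[OF P_subspace] .
lemma P_add: "p \<in> P \<Longrightarrow> q \<in> P \<Longrightarrow> p + q \<in> P" using V.subspace_add[OF P_subspace] .
lemma P_scale: "p \<in> P \<Longrightarrow> sp a p \<in> P" using V.subspace_scale[OF P_subspace] .
lemma P_diff: "p \<in> P \<Longrightarrow> q \<in> P \<Longrightarrow> p - q \<in> P" using V.subspace_diff[OF P_subspace] .
lemma P_sum: "(\<And>i. i \<in> I \<Longrightarrow> f i \<in> P) \<Longrightarrow> sum f I \<in> P" using V.subspace_sum[OF P_subspace] .

lemma pi_in_P: "F \<in> HomC E sp P \<Longrightarrow> \<pi> F \<in> P"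
  using contra unfolding is_contra_def by simp

lemma pi_linear: "lin_on (fscale sp) sp (HomC E sp P) \<pi>"
  using contra unfolding is_contra_def by simp

lemma pi_add: "F \<in> HomC E sp P \<Longrightarrow> G \<in> HomC E sp P \<Longrightarrow> \<pi> (F + G) = \<pi> F + \<pi> G"
  using lin_on_add[OF pi_linear] .

lemma pi_scale: "F \<in> HomC E sp P \<Longrightarrow> \<pi> (fscale sp a F) = sp a (\<pi> F)"
  using lin_on_scale[OF pi_linear] .

lemma pi_counit: "p \<in> P \<Longrightarrow> \<pi> (extC E (\<lambda>c. sp (coalg_eps E c) p)) = p"
  using contra unfolding is_contra_def by simp

lemma pi_coassoc:
  assumes "\<forall>c\<in>CE E. f c \<in> HomC E sp P" "lin_on cscale (fscale sp) (CE E) f" "\<forall>c. c \<notin> CE E \<longrightarrow> f c = 0"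
  shows "\<pi> (extC E (\<lambda>c. \<pi> (f c))) = \<pi> (extC E (comult_comp E sp f))"
  using contra assms unfolding is_contra_def by blast

lemma HomC_I: "lin_on cscale sp (CE E) F \<Longrightarrow> (\<And>c. c \<in> CE E \<Longrightarrow> F c \<in> P) \<Longrightarrow> (\<And>c. c \<notin> CE E \<Longrightarrow> F c = 0)
  \<Longrightarrow> F \<in> HomC E sp P"
  unfolding HomC_def by blast

lemma HomC_D: assumes "F \<in> HomC E sp P"
  shows "lin_on cscale sp (CE E) F" "c \<in> CE E \<Longrightarrow> F c \<in> P" "c \<notin> CE E \<Longrightarrow> F c = 0"
  using assms unfolding HomC_def by blast+

lemma HomC_zero: "(\<lambda>_. 0) \<in> HomC E sp P"
  by (rule HomC_I) (auto simp: lin_on_def P_zero)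

lemma HomC_add: assumes "F \<in> HomC E sp P" "G \<in> HomC E sp P" shows "F + G \<in> HomC E sp P"
proof (rule HomC_I)
  show "lin_on cscale sp (CE E) (F + G)"
    using HomC_D(1)[OF assms(1)] HomC_D(1)[OF assms(2)]
    unfolding lin_on_def by (simp add: algebra_simps V.scale_right_distrib)
qed (use HomC_D[OF assms(1)] HomC_D[OF assms(2)] P_add in auto)

lemma HomC_scale: assumes "F \<in> HomC E sp P" shows "fscale sp a F \<in> HomC E sp P"
proof (rule HomC_I)
  show "lin_on cscale sp (CE E) (fscale sp a F)"
    using HomC_D(1)[OF assms(1)]
    unfolding lin_on_def fscale_def by (simp add: algebra_simps V.scale_right_distrib mult.commute)
qed (use HomC_D[OF assms(1)] P_scale in \<open>auto simp: fscale_def\<close>)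

lemma HomC_sum: "(\<And>i. i \<in> I \<Longrightarrow> F i \<in> HomC E sp P) \<Longrightarrow> (\<lambda>c. \<Sum>i\<in>I. F i c) \<in> HomC E sp P"
proof (induction I rule: infinite_finite_induct)
  case (insert x I)
  have "(\<lambda>c. \<Sum>i\<in>insert x I. F i c) = F x + (\<lambda>c. \<Sum>i\<in>I. F i c)"
    using insert.hyps by (auto simp: plus_fun_def)
  then show ?case using HomC_add insert by auto
qed (simp_all add: HomC_zero)

lemma pi_zero: "\<pi> (\<lambda>_. 0) = 0"
  using lin_on_zero[OF pi_linear] HomC_zero by (simp add: zero_fun_def)

lemma pi_sum: "(\<And>i. i \<in> I \<Longrightarrow> F i \<in> HomC E sp P) \<Longrightarrow> \<pi> (\<lambda>c. \<Sum>i\<in>I. F i c) = (\<Sum>i\<in>I. \<pi> (F i))"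
proof (induction I rule: infinite_finite_induct)
  case (infinite A) then show ?case using pi_zero by simp
next
  case empty then show ?case using pi_zero by simp
next
  case (insert x I)
  have "(\<lambda>c. \<Sum>i\<in>insert x I. F i c) = F x + (\<lambda>c. \<Sum>i\<in>I. F i c)"
    using insert.hyps by (auto simp: plus_fun_def)
  then show ?case using pi_add[of "F x" "\<lambda>c. \<Sum>i\<in>I. F i c"] HomC_sum[of I F] insert by auto
qed

lemma rank_one_in_HomC: assumes "clinear E \<phi>" "p \<in> P" shows "rank_one E sp \<phi> p \<in> HomC E sp P"
proof (rule HomC_I)
  note l = assms(1)[unfolded clinear_def]
  show "lin_on cscale sp (CE E) (rank_one E sp \<phi> p)"
    unfolding lin_on_def
    by (simp add: rank_one_apply CE_add CE_scale lin_on_add[OF l] lin_on_scale[OF l] V.scale_left_distrib)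
qed (simp_all add: rank_one_apply rank_one_outside assms(2) P_scale)

lemma cact_in_P: "clinear E \<phi> \<Longrightarrow> p \<in> P \<Longrightarrow> cact E sp \<pi> \<phi> p \<in> P"
  unfolding cact_rank_one by (rule pi_in_P[OF rank_one_in_HomC])

lemma cact_cong: "(\<And>c. c \<in> CE E \<Longrightarrow> \<phi> c = \<psi> c) \<Longrightarrow> cact E sp \<pi> \<phi> p = cact E sp \<pi> \<psi> p"
proof -
  assume a: "\<And>c. c \<in> CE E \<Longrightarrow> \<phi> c = \<psi> c"
  have "extC E (\<lambda>c. sp (\<phi> c) p) = extC E (\<lambda>c. sp (\<psi> c) p)"
    by (rule extC_cong) (simp add: a)
  then show ?thesis unfolding cact_def by simp
qed

lemma cact_add_right: assumes "clinear E \<phi>" "p \<in> P" "q \<in> P"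
  shows "cact E sp \<pi> \<phi> (p + q) = cact E sp \<pi> \<phi> p + cact E sp \<pi> \<phi> q"
proof -
  have "rank_one E sp \<phi> (p + q) = rank_one E sp \<phi> p + rank_one E sp \<phi> q"
    by (auto simp: rank_one_def extC_def plus_fun_def V.scale_right_distrib)
  then show ?thesis unfolding cact_rank_one
      using pi_add[OF rank_one_in_HomC[OF assms(1,2)] rank_one_in_HomC[OF assms(1,3)]] by simp
qed

lemma cact_scale_right: assumes "clinear E \<phi>" "p \<in> P"
  shows "cact E sp \<pi> \<phi> (sp a p) = sp a (cact E sp \<pi> \<phi> p)"
proof -
  have "rank_one E sp \<phi> (sp a p) = fscale sp a (rank_one E sp \<phi> p)"
    by (auto simp: rank_one_def extC_def fscale_def mult.commute)
  then show ?thesis unfolding cact_rank_one using pi_scale[OF rank_one_in_HomC[OF assms(1,2)]] by simp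
qed

lemma cact_add_left: assumes "clinear E \<phi>" "clinear E \<psi>" "p \<in> P"
  shows "cact E sp \<pi> (\<lambda>c. \<phi> c + \<psi> c) p = cact E sp \<pi> \<phi> p + cact E sp \<pi> \<psi> p"
proof -
  have "rank_one E sp (\<lambda>c. \<phi> c + \<psi> c) p = rank_one E sp \<phi> p + rank_one E sp \<psi> p"
    by (auto simp: rank_one_def extC_def plus_fun_def V.scale_left_distrib)
  then show ?thesis unfolding cact_rank_one
      using pi_add[OF rank_one_in_HomC[OF assms(1) assms(3)] rank_one_in_HomC[OF assms(2) assms(3)]] by simp
qed

lemma cact_scale_left: assumes "clinear E \<phi>" "p \<in> P"
  shows "cact E sp \<pi> (\<lambda>c. a * \<phi> c) p = sp a (cact E sp \<pi> \<phi> p)"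
proof -
  have "rank_one E sp (\<lambda>c. a * \<phi> c) p = fscale sp a (rank_one E sp \<phi> p)"
    by (auto simp: rank_one_def extC_def fscale_def)
  then show ?thesis unfolding cact_rank_one using pi_scale[OF rank_one_in_HomC[OF assms(1,2)]] by simp
qed

lemma cact_sum_left: assumes "\<And>i. i \<in> I \<Longrightarrow> clinear E (\<phi> i)" "p \<in> P"
  shows "cact E sp \<pi> (\<lambda>c. \<Sum>i\<in>I. \<phi> i c) p = (\<Sum>i\<in>I. cact E sp \<pi> (\<phi> i) p)"
proof -
  have "rank_one E sp (\<lambda>c. \<Sum>i\<in>I. \<phi> i c) p = (\<lambda>c. \<Sum>i\<in>I. rank_one E sp (\<phi> i) p c)"
    by (simp add: rank_one_def extC_def fun_eq_iff V.scale_sum_left)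
  then show ?thesis unfolding cact_rank_one using assms by (simp add: pi_sum rank_one_in_HomC)
qed

lemma cact_zero_right: "clinear E \<phi> \<Longrightarrow> cact E sp \<pi> \<phi> 0 = 0"
  using cact_add_right[of \<phi> 0 0] P_zero by simp

lemma cact_diff_right: assumes "clinear E \<phi>" "p \<in> P" "q \<in> P"
  shows "cact E sp \<pi> \<phi> (p - q) = cact E sp \<pi> \<phi> p - cact E sp \<pi> \<phi> q"
proof -
  have "cact E sp \<pi> \<phi> (p - q) + cact E sp \<pi> \<phi> q = cact E sp \<pi> \<phi> p"
    using cact_add_right[OF assms(1) P_diff[OF assms(2,3)] assms(3)] by simp
  then show ?thesis by (simp add: algebra_simps)
qed

end

section \<open>A contramodule is the product of its components\<close>

lemma comult_comp_eq_sum: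
  assumes "\<And>x w. (x, w) \<in> csupp E c \<Longrightarrow>
     (\<Sum>m\<in>mid E x w. \<Sum>b\<in>hbasis E x m. \<Sum>b'\<in>hbasis E m w.
        sp (c x w (cmp E x m w b b')) (f (cinj m w (hdual E m w b')) (cinj x m (hdual E x m b)))) = H x w"
  shows "comult_comp E sp f c = (\<Sum>(x, w)\<in>csupp E c. H x w)"
  unfolding comult_comp_def
  by (rule sum.cong[OF refl]) (use assms in auto)

context contramodule begin

lemma diag_hom_in_HomC: assumes q: "\<And>x. x \<in> Ob E \<Longrightarrow> q x \<in> P" shows "diag_hom E sp q \<in> HomC E sp P"
proof (rule HomC_I)
  show "lin_on cscale sp (CE E) (diag_hom E sp q)"
    by (rule diag_hom_linear[OF V.vector_space_axioms])
  show "diag_hom E sp q c \<in> P" if "c \<in> CE E" for c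
    unfolding diag_hom_def extC_def using that diag_supp_subset q by (auto intro!: P_sum P_scale)
qed (simp add: diag_hom_def extC_def)

lemma pi_coassoc_extC:
  assumes f: "\<And>c. c \<in> CE E \<Longrightarrow> f c \<in> HomC E sp P" and lin: "lin_on cscale (fscale sp) (CE E) f"
  shows "\<pi> (extC E (\<lambda>c. \<pi> (f c))) = \<pi> (extC E (comult_comp E sp (extC E f)))"
proof -
  have "lin_on cscale (fscale sp) (CE E) (extC E f)"
    using lin CE_add CE_scale unfolding lin_on_def extC_def by simp
  moreover have "extC E (\<lambda>c. \<pi> (extC E f c)) = extC E (\<lambda>c. \<pi> (f c))"
    by (rule extC_cong) (simp add: extC_def)
  ultimately show ?thesis
    using pi_coassoc[of "extC E f"] f by (simp add: extC_def)
qed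

lemma cact_pi_coassoc:
  assumes \<phi>: "clinear E \<phi>" and F: "F \<in> HomC E sp P"
  shows "cact E sp \<pi> \<phi> (\<pi> F) = \<pi> (extC E (comult_comp E sp (extC E (\<lambda>c. fscale sp (\<phi> c) F))))"
proof -
  have lin: "lin_on cscale (fscale sp) (CE E) (\<lambda>c. fscale sp (\<phi> c) F)"
    using \<phi> unfolding clinear_def lin_on_def fscale_def
    by (simp add: fun_eq_iff V.scale_left_distrib)
  have "cact E sp \<pi> \<phi> (\<pi> F) = \<pi> (extC E (\<lambda>c. \<pi> (fscale sp (\<phi> c) F)))"
    unfolding cact_def using pi_scale[OF F] by simp
  also have "\<dots> = \<pi> (extC E (comult_comp E sp (extC E (\<lambda>c. fscale sp (\<phi> c) F))))"
    by (rule pi_coassoc_extC[OF HomC_scale[OF F] lin])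
  finally show ?thesis .
qed

lemma sum_hbasis_cmp_hdual:
  assumes c: "c \<in> CE E" and x: "x \<in> Ob E" and y: "y \<in> Ob E" and z: "z \<in> Ob E"
    and b: "b \<in> Hom E x y" and h: "h \<in> Hom E y z"
  shows "(\<Sum>b'\<in>hbasis E y z. sp (c x z (cmp E x y z b b')) (sp (hdual E y z b' h) X))
    = sp (c x z (cmp E x y z b h)) X"
proof -
  have "(\<Sum>b'\<in>hbasis E y z. sp (c x z (cmp E x y z b b')) (sp (hdual E y z b' h) X))
     = sp (\<Sum>b'\<in>hbasis E y z. hdual E y z b' h * c x z (cmp E x y z b b')) X"
    by (simp add: V.scale_sum_left mult.commute)
  also have "\<dots> = sp (c x z (cmp E x y z b h)) X"
    using linear_form_expansion[OF y z h CE_cmp_linear_right[OF c x y z b]] by simp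
  finally show ?thesis .
qed

definition ev_comult_term :: "'o \<Rightarrow> 'o \<Rightarrow> 'h \<Rightarrow> (('o \<Rightarrow> 'o \<Rightarrow> 'h \<Rightarrow> 'k) \<Rightarrow> 'p) \<Rightarrow> ('o \<Rightarrow> 'o \<Rightarrow> 'h \<Rightarrow> 'k) \<Rightarrow> 'o \<Rightarrow> 'p" where
  "ev_comult_term y z h F c a =
     (\<Sum>\<beta>\<in>hbasis E a y. sp (c a z (cmp E a y z \<beta> h)) (F (cinj a y (hdual E a y \<beta>))))"

lemma ev_comult_term_zero:
  assumes c: "c \<in> CE E" and a: "a \<in> Ob E" and yz: "y \<in> Ob E" "z \<in> Ob E" and h: "h \<in> Hom E y z"
    and cases: "(a, z) \<notin> csupp E c \<or> Hom E a y = {0} \<or> Hom E y z = {0}"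
  shows "ev_comult_term y z h F c a = 0"
  using cases
proof (elim disjE)
  assume "(a, z) \<notin> csupp E c"
  from notin_csupp_zero[OF a yz(2) this] show ?thesis unfolding ev_comult_term_def by simp
next
  assume "Hom E a y = {0}"
  then show ?thesis unfolding ev_comult_term_def using hbasis_empty[OF a yz(1)] by simp
next
  assume "Hom E y z = {0}"
  then have "h = 0" using h by blast
  then show ?thesis unfolding ev_comult_term_def
    using cmp_zero_right[OF a yz] hbasis_in_Hom[OF a yz(1)] CE_apply_zero[OF c] by simp
qed

lemma comult_comp_ev_component:
  assumes c: "c \<in> CE E" and x: "x \<in> Ob E" and w: "w \<in> Ob E"
    and y: "y \<in> Ob E" and z: "z \<in> Ob E" and h: "h \<in> Hom E y z"
  shows "(\<Sum>m\<in>mid E x w. \<Sum>b\<in>hbasis E x m. \<Sum>b'\<in>hbasis E m w.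
      sp (c x w (cmp E x m w b b'))
        (extC E (\<lambda>c. fscale sp (c y z h) F) (cinj m w (hdual E m w b')) (cinj x m (hdual E x m b))))
    = (if w = z then ev_comult_term y z h F c x else 0)"
    (is "(\<Sum>m\<in>mid E x w. ?S m) = _")
proof -
  have S: "?S m = (if m = y \<and> w = z then ev_comult_term y z h F c x else 0)" if m: "m \<in> Ob E" for m
  proof (cases "m = y \<and> w = z")
    case True
    then have "?S m = (\<Sum>b\<in>hbasis E x y. \<Sum>b'\<in>hbasis E y z.
        sp (c x z (cmp E x y z b b')) (sp (hdual E y z b' h) (F (cinj x y (hdual E x y b)))))"
      using cinj_hdual_in_CE[OF y z] by (simp add: extC_def fscale_def cinj_def)
    also have "\<dots> = ev_comult_term y z h F c x"
      unfolding ev_comult_term_def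
      by (intro sum.cong refl sum_hbasis_cmp_hdual[OF c x y z _ h] hbasis_in_Hom[OF x y])
    finally show ?thesis using True by simp
  next
    case False
    then show ?thesis using cinj_hdual_in_CE[OF m w] by (auto simp: extC_def fscale_def cinj_def)
  qed
  have "(\<Sum>m\<in>mid E x w. ?S m) = (\<Sum>m\<in>mid E x w. if m = y \<and> w = z then ev_comult_term y z h F c x else 0)"
    by (rule sum.cong[OF refl]) (simp add: S mid_iff)
  also have "\<dots> = (\<Sum>m\<in>mid E x w. if m = y then (if w = z then ev_comult_term y z h F c x else 0) else 0)"
    by (rule sum.cong) auto
  also have "\<dots> = (if y \<in> mid E x w then (if w = z then ev_comult_term y z h F c x else 0) else 0)"
    by (rule sum.delta[OF finite_mid[OF x w]])
  also have "\<dots> = (if w = z then ev_comult_term y z h F c x else 0)"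
    using ev_comult_term_zero[OF c x y z h] y by (auto simp: mid_iff)
  finally show ?thesis .
qed

lemma comult_comp_ev:
  assumes c: "c \<in> CE E" and y: "y \<in> Ob E" and z: "z \<in> Ob E" and h: "h \<in> Hom E y z"
    and T: "finite T" "T \<subseteq> Ob E" "lower_objs E y \<subseteq> T"
  shows "comult_comp E sp (extC E (\<lambda>c. fscale sp (c y z h) F)) c = (\<Sum>a\<in>T. ev_comult_term y z h F c a)"
proof -
  let ?G = "\<lambda>(x, w). if w = z then ev_comult_term y z h F c x else 0"
  have "comult_comp E sp (extC E (\<lambda>c. fscale sp (c y z h) F)) c = (\<Sum>xw\<in>csupp E c. ?G xw)"
    by (rule comult_comp_eq_sum) (use comult_comp_ev_component[OF c _ _ y z h] csupp_in_Ob in auto)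
  also have "\<dots> = (\<Sum>xw\<in>T \<times> {z}. ?G xw)"
  proof (rule sum.same_carrierI[where C = "csupp E c \<union> T \<times> {z}"])
    show "finite (csupp E c \<union> T \<times> {z})" using CE_D(1)[OF c] T(1) by simp
    show "?G xw = 0" if "xw \<in> csupp E c \<union> T \<times> {z} - csupp E c" for xw
      using that ev_comult_term_zero[OF c _ y z h] T(2) by auto
    show "?G xw = 0" if "xw \<in> csupp E c \<union> T \<times> {z} - T \<times> {z}" for xw
    proof (cases xw)
      case (Pair a w)
      then have a: "a \<in> Ob E" and "w = z \<Longrightarrow> a \<notin> T" using that csupp_in_Ob by auto
      then have "w = z \<Longrightarrow> Hom E a y = {0}" using T(3) unfolding lower_objs_def by blast
      then show ?thesis using Pair ev_comult_term_zero[OF c a y z h] by auto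
    qed
  qed auto
  also have "\<dots> = (\<Sum>a\<in>T. ev_comult_term y z h F c a)"
    by (simp add: sum.cartesian_product[symmetric])
  finally show ?thesis .
qed

lemma cact_ev_pi:
  assumes y: "y \<in> Ob E" and z: "z \<in> Ob E" and h: "h \<in> Hom E y z" and F: "F \<in> HomC E sp P"
    and T: "finite T" "T \<subseteq> Ob E" "lower_objs E y \<subseteq> T"
  shows "cact E sp \<pi> (ev_fun y z h) (\<pi> F) = \<pi> (extC E (\<lambda>c. \<Sum>a\<in>T. ev_comult_term y z h F c a))"
proof -
  have "cact E sp \<pi> (ev_fun y z h) (\<pi> F)
      = \<pi> (extC E (comult_comp E sp (extC E (\<lambda>c. fscale sp (c y z h) F))))"
    using cact_pi_coassoc[OF clinear_ev_fun F] by (simp add: ev_fun_def)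
  also have "extC E (comult_comp E sp (extC E (\<lambda>c. fscale sp (c y z h) F)))
      = extC E (\<lambda>c. \<Sum>a\<in>T. ev_comult_term y z h F c a)"
    by (rule extC_cong) (rule comult_comp_ev[OF _ y z h T])
  finally show ?thesis .
qed

lemma ev_comult_term_rank_one:
  assumes c: "c \<in> CE E" and a: "a \<in> Ob E" and x: "x \<in> Ob E" and y: "y \<in> Ob E" and z: "z \<in> Ob E"
    and g: "g \<in> Hom E x w" and h: "h \<in> Hom E y z"
  shows "ev_comult_term y z h (rank_one E sp (ev_fun x w g) p) c a
    = (if a = x \<and> w = y then sp (c x z (cmp E x y z g h)) p else 0)"
proof -
  have F: "rank_one E sp (ev_fun x w g) p (cinj a y (hdual E a y \<beta>))
      = sp (if a = x \<and> y = w then hdual E a y \<beta> g else 0) p" for \<beta>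
    by (simp add: rank_one_apply[OF cinj_hdual_in_CE[OF a y]] ev_fun_cinj)
  show ?thesis
  proof (cases "a = x \<and> w = y")
    case True
    then have "ev_comult_term y z h (rank_one E sp (ev_fun x w g) p) c a
        = sp (\<Sum>\<beta>\<in>hbasis E x y. hdual E x y \<beta> g * c x z (cmp E x y z \<beta> h)) p"
      unfolding ev_comult_term_def F by (simp add: V.scale_sum_left mult.commute)
    also have "\<dots> = sp (c x z (cmp E x y z g h)) p"
      using True g linear_form_expansion[OF x y _ CE_cmp_linear_left[OF c x y z h]] by simp
    finally show ?thesis using True by simp
  next
    case False
    then show ?thesis unfolding ev_comult_term_def F by auto
  qed
qed

lemma cact_ev_ev:
  assumes x: "x \<in> Ob E" and w: "w \<in> Ob E" and y: "y \<in> Ob E" and z: "z \<in> Ob E"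
    and g: "g \<in> Hom E x w" and h: "h \<in> Hom E y z" and p: "p \<in> P"
  shows "cact E sp \<pi> (ev_fun y z h) (cact E sp \<pi> (ev_fun x w g) p)
       = (if w = y then cact E sp \<pi> (ev_fun x z (cmp E x y z g h)) p else 0)"
proof -
  define T where "T = insert x (lower_objs E y)"
  have T: "finite T" "T \<subseteq> Ob E" "lower_objs E y \<subseteq> T"
    unfolding T_def using finite_lower_objs[OF y] x by (auto simp: lower_objs_def)
  have "cact E sp \<pi> (ev_fun y z h) (cact E sp \<pi> (ev_fun x w g) p)
      = \<pi> (extC E (\<lambda>c. \<Sum>a\<in>T. ev_comult_term y z h (rank_one E sp (ev_fun x w g) p) c a))"
    unfolding cact_rank_one[of _ _ _ "ev_fun x w g"]
    by (rule cact_ev_pi[OF y z h rank_one_in_HomC[OF clinear_ev_fun p] T])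
  also have "\<dots> = \<pi> (extC E (\<lambda>c. if w = y then sp (c x z (cmp E x y z g h)) p else 0))"
  proof (intro arg_cong[where f = \<pi>] extC_cong)
    fix c assume c: "c \<in> CE E"
    have "(\<Sum>a\<in>T. ev_comult_term y z h (rank_one E sp (ev_fun x w g) p) c a)
        = (\<Sum>a\<in>T. if a = x then (if w = y then sp (c x z (cmp E x y z g h)) p else 0) else 0)"
      by (rule sum.cong[OF refl]) (use T(2) ev_comult_term_rank_one[OF c _ x y z g h] in auto)
    then show "(\<Sum>a\<in>T. ev_comult_term y z h (rank_one E sp (ev_fun x w g) p) c a)
        = (if w = y then sp (c x z (cmp E x y z g h)) p else 0)"
      using T(1) by (simp add: T_def)
  qed
  finally show ?thesis
    by (cases "w = y") (simp_all add: cact_def ev_fun_def extC_zero pi_zero)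
qed

lemma cact_e_pi:
  assumes y: "y \<in> Ob E" and F: "F \<in> HomC E sp P"
    and T: "finite T" "T \<subseteq> Ob E" "lower_objs E y \<subseteq> T"
  shows "cact E sp \<pi> (e_fun E y) (\<pi> F)
     = (\<Sum>a\<in>T. \<Sum>\<beta>\<in>hbasis E a y. cact E sp \<pi> (ev_fun a y \<beta>) (F (cinj a y (hdual E a y \<beta>))))"
proof -
  let ?R = "\<lambda>a \<beta>. rank_one E sp (ev_fun a y \<beta>) (F (cinj a y (hdual E a y \<beta>)))"
  have R: "?R a \<beta> \<in> HomC E sp P" if "a \<in> T" for a \<beta>
    using rank_one_in_HomC[OF clinear_ev_fun HomC_D(2)[OF F cinj_hdual_in_CE]] that T(2) y by blast
  have "cact E sp \<pi> (e_fun E y) (\<pi> F) = \<pi> (extC E (\<lambda>c. \<Sum>a\<in>T. ev_comult_term y y (idm E y) F c a))"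
    unfolding e_fun_eq_ev_fun using cact_ev_pi[OF y y idm_in_Hom[OF y] F T] .
  also have "extC E (\<lambda>c. \<Sum>a\<in>T. ev_comult_term y y (idm E y) F c a) = (\<lambda>c. \<Sum>a\<in>T. \<Sum>\<beta>\<in>hbasis E a y. ?R a \<beta> c)"
    using T(2) y cmp_idm_right hbasis_in_Hom
    by (auto simp: fun_eq_iff extC_def ev_comult_term_def rank_one_apply rank_one_outside ev_fun_def
        intro!: sum.cong)
  also have "\<pi> \<dots> = (\<Sum>a\<in>T. \<Sum>\<beta>\<in>hbasis E a y. \<pi> (?R a \<beta>))"
    using R by (simp add: pi_sum HomC_sum)
  finally show ?thesis unfolding cact_rank_one .
qed

lemma diag_hom_rank_one_cinj_hdual:
  assumes x: "x \<in> Ob E" and m: "m \<in> Ob E" and w: "w \<in> Ob E"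
  shows "extC E (diag_hom E (fscale sp) (\<lambda>x. rank_one E sp (e_fun E x) q))
      (cinj m w (hdual E m w b')) (cinj x m (hdual E x m b))
    = sp (if m = w then hdual E m w b' (idm E m) else 0) (sp (if x
        = m then hdual E x m b (idm E m) else 0) q)"
proof -
  have s0: "fscale sp 0 F = 0" for F :: "('o \<Rightarrow> 'o \<Rightarrow> 'h \<Rightarrow> 'k) \<Rightarrow> 'p"
    by (simp add: fscale_def fun_eq_iff)
  show ?thesis
    by (simp add: extC_def cinj_hdual_in_CE[OF m w] diag_hom_cinj_hdual[where s = "fscale sp", OF m w s0]
        fscale_def rank_one_apply[OF cinj_hdual_in_CE[OF x m]]) (simp add: e_fun_def cinj_def)
qed

lemma sum_hbasis_cmp_hdual_idm:
  assumes c: "c \<in> CE E" and x: "x \<in> Ob E"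
  shows "(\<Sum>b\<in>hbasis E x x. \<Sum>b'\<in>hbasis E x x.
      sp (c x x (cmp E x x x b b')) (sp (hdual E x x b' (idm E x)) (sp (hdual E x x b (idm E x)) q)))
    = sp (c x x (idm E x)) q"
proof -
  have "(\<Sum>b\<in>hbasis E x x. \<Sum>b'\<in>hbasis E x x.
      sp (c x x (cmp E x x x b b')) (sp (hdual E x x b' (idm E x)) (sp (hdual E x x b (idm E x)) q)))
    = (\<Sum>b\<in>hbasis E x x. sp (c x x b) (sp (hdual E x x b (idm E x)) q))"
  proof (rule sum.cong[OF refl])
    fix b assume "b \<in> hbasis E x x"
    then have b: "b \<in> Hom E x x" by (rule hbasis_in_Hom[OF x x])
    show "(\<Sum>b'\<in>hbasis E x x. sp (c x x (cmp E x x x b b'))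
        (sp (hdual E x x b' (idm E x)) (sp (hdual E x x b (idm E x)) q)))
      = sp (c x x b) (sp (hdual E x x b (idm E x)) q)"
      by (simp only: sum_hbasis_cmp_hdual[OF c x x x b idm_in_Hom[OF x]] cmp_idm_right[OF x x b])
  qed
  also have "\<dots> = sp (\<Sum>b\<in>hbasis E x x. hdual E x x b (idm E x) * c x x b) q"
    by (simp add: V.scale_sum_left mult.commute)
  also have "\<dots> = sp (c x x (idm E x)) q"
    using linear_form_expansion[OF x x idm_in_Hom[OF x] CE_D(3)[OF c x x]] by simp
  finally show ?thesis .
qed

lemma comult_comp_diag_hom_component:
  assumes c: "c \<in> CE E" and x: "x \<in> Ob E" and w: "w \<in> Ob E" and q: "q \<in> P"
  shows "(\<Sum>m\<in>mid E x w. \<Sum>b\<in>hbasis E x m. \<Sum>b'\<in>hbasis E m w.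
      sp (c x w (cmp E x m w b b'))
        (extC E (diag_hom E (fscale sp) (\<lambda>x. rank_one E sp (e_fun E x) q))
          (cinj m w (hdual E m w b')) (cinj x m (hdual E x m b))))
    = (if x = w then sp (c x x (idm E x)) q else 0)"
    (is "(\<Sum>m\<in>mid E x w. ?S m) = _")
proof -
  define Z where "Z = (\<Sum>b\<in>hbasis E x x. \<Sum>b'\<in>hbasis E x x.
    sp (c x x (cmp E x x x b b')) (sp (hdual E x x b' (idm E x)) (sp (hdual E x x b (idm E x)) q)))"
  note entry = diag_hom_rank_one_cinj_hdual[OF x _ w]
  have S: "?S m = (if m = x \<and> w = x then Z else 0)" if m: "m \<in> Ob E" for m
  proof (cases "m = x \<and> w = x")
    case True
    then have m_eq: "m = x" and w_eq: "w = x" by auto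
    show ?thesis using entry[OF x, unfolded w_eq] unfolding m_eq w_eq Z_def by simp
  next
    case False
    then have "extC E (diag_hom E (fscale sp) (\<lambda>x. rank_one E sp (e_fun E x) q))
        (cinj m w (hdual E m w b')) (cinj x m (hdual E x m b)) = 0" for b b'
      unfolding entry[OF m] using False by auto
    then have "?S m = 0" by simp
    with False show ?thesis by presburger
  qed
  have "(\<Sum>m\<in>mid E x w. ?S m) = (\<Sum>m\<in>mid E x w. if m = x then (if w = x then Z else 0) else 0)"
    by (rule sum.cong[OF refl]) (auto simp: S mid_iff)
  also have "\<dots> = (if x \<in> mid E x w then (if w = x then Z else 0) else 0)"
    by (rule sum.delta[OF finite_mid[OF x w]])
  also have "\<dots> = (if x = w then Z else 0)"
    using self_in_mid[OF x] by auto
  also have "Z = sp (c x x (idm E x)) q"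
    unfolding Z_def by (rule sum_hbasis_cmp_hdual_idm[OF c x])
  finally show ?thesis .
qed

lemma comult_comp_diag_hom:
  assumes c: "c \<in> CE E" and q: "q \<in> P"
  shows "comult_comp E sp (extC E (diag_hom E (fscale sp) (\<lambda>x. rank_one E sp (e_fun E x) q))) c
    = sp (coalg_eps E c) q"
proof -
  have "comult_comp E sp (extC E (diag_hom E (fscale sp) (\<lambda>x. rank_one E sp (e_fun E x) q))) c
      = (\<Sum>(x, w)\<in>csupp E c. if x = w then sp (c x x (idm E x)) q else 0)"
    by (rule comult_comp_eq_sum) (use comult_comp_diag_hom_component[OF c _ _ q] csupp_in_Ob in auto)
  also have "\<dots> = (\<Sum>x\<in>diag_supp E c. sp (c x x (idm E x)) q)"
    by (rule csupp_diag_sum[OF c])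
  finally show ?thesis
    unfolding coalg_eps_diag_supp by (simp add: V.scale_sum_left)
qed

lemma pi_diag_hom_components:
  assumes q: "q \<in> P"
  shows "\<pi> (diag_hom E sp (\<lambda>x. cact E sp \<pi> (e_fun E x) q)) = q"
proof -
  let ?R = "\<lambda>x. rank_one E sp (e_fun E x) q"
  let ?f = "diag_hom E (fscale sp) ?R"
  have R: "?R x \<in> HomC E sp P" for x by (rule rank_one_in_HomC[OF clinear_e_fun q])
  have f_eq: "?f c = (\<lambda>c'. \<Sum>x\<in>diag_supp E c. fscale sp (c x x (idm E x)) (?R x) c')"
    if "c \<in> CE E" for c
    using that by (simp add: diag_hom_def extC_def sum_fun)
  have f_in: "?f c \<in> HomC E sp P" if "c \<in> CE E" for c
    unfolding f_eq[OF that] by (rule HomC_sum) (simp add: HomC_scale R)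
  have pi_f: "\<pi> (?f c) = (\<Sum>x\<in>diag_supp E c. sp (c x x (idm E x)) (cact E sp \<pi> (e_fun E x) q))"
    if "c \<in> CE E" for c
    unfolding f_eq[OF that] by (simp add: pi_sum HomC_scale R pi_scale cact_rank_one)
  have "\<pi> (extC E (\<lambda>c. \<pi> (?f c))) = \<pi> (diag_hom E sp (\<lambda>x. cact E sp \<pi> (e_fun E x) q))"
    unfolding diag_hom_def[of E sp] by (intro arg_cong[where f = \<pi>] extC_cong) (rule pi_f)
  moreover have "extC E (comult_comp E sp (extC E ?f)) = extC E (\<lambda>c. sp (coalg_eps E c) q)"
    by (rule extC_cong) (rule comult_comp_diag_hom[OF _ q])
  ultimately show ?thesis
    using pi_coassoc_extC[OF f_in diag_hom_linear[OF vector_space_fscale[OF V.vector_space_axioms]]]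
      pi_counit[OF q] by simp
qed

lemma eq_zero_if_components_zero:
  assumes q: "q \<in> P" and e0: "\<And>x. x \<in> Ob E \<Longrightarrow> cact E sp \<pi> (e_fun E x) q = 0"
  shows "q = 0"
proof -
  have "diag_hom E sp (\<lambda>x. cact E sp \<pi> (e_fun E x) q) = (\<lambda>_. 0)"
    unfolding diag_hom_def extC_def fun_eq_iff using e0 diag_supp_subset by (simp add: subset_iff)
  then show ?thesis using pi_diag_hom_components[OF q] pi_zero by simp
qed

lemma cact_e_pi_diag_hom:
  assumes y: "y \<in> Ob E" and q: "\<And>x. x \<in> Ob E \<Longrightarrow> q x \<in> P"
  shows "cact E sp \<pi> (e_fun E y) (\<pi> (diag_hom E sp q)) = cact E sp \<pi> (e_fun E y) (q y)"
proof -
  define T where "T = insert y (lower_objs E y)"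
  have T: "finite T" "T \<subseteq> Ob E" "lower_objs E y \<subseteq> T"
    unfolding T_def using finite_lower_objs[OF y] y by (auto simp: lower_objs_def)
  have qy: "q y \<in> P" using q y by blast
  have "cact E sp \<pi> (e_fun E y) (\<pi> (diag_hom E sp q))
     = (\<Sum>a\<in>T. \<Sum>\<beta>\<in>hbasis E a y. cact E sp \<pi> (ev_fun a y \<beta>) (diag_hom E sp q (cinj a y (hdual E a y \<beta>))))"
    by (rule cact_e_pi[OF y diag_hom_in_HomC[OF q] T])
  also have "\<dots> = (\<Sum>\<beta>\<in>hbasis E y y. cact E sp \<pi> (ev_fun y y \<beta>) (sp (hdual E y y \<beta> (idm E y)) (q y)))"
  proof -
    have "(\<Sum>a\<in>T. \<Sum>\<beta>\<in>hbasis E a y. cact E sp \<pi> (ev_fun a y \<beta>) (diag_hom E sp q (cinj a y (hdual E a y \<beta>))))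
        = (\<Sum>a\<in>T. if a = y then
             \<Sum>\<beta>\<in>hbasis E y y. cact E sp \<pi> (ev_fun y y \<beta>) (sp (hdual E y y \<beta> (idm E y)) (q y)) else 0)"
      by (rule sum.cong[OF refl])
        (use T(2) diag_hom_cinj_hdual[where s = sp, OF _ y V.scale_zero_left]
          cact_zero_right[OF clinear_ev_fun] in auto)
    then show ?thesis using T(1) by (simp add: T_def)
  qed
  also have "\<dots> = cact E sp \<pi> (\<lambda>c. \<Sum>\<beta>\<in>hbasis E y y. hdual E y y \<beta> (idm E y) * ev_fun y y \<beta> c) (q y)"
    by (simp add: cact_sum_left clinear_scale clinear_ev_fun qy cact_scale_right cact_scale_left)
  also have "\<dots> = cact E sp \<pi> (e_fun E y) (q y)"
    using linear_form_expansion[OF y y idm_in_Hom[OF y] CE_D(3)[OF _ y y]]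
    by (intro cact_cong) (simp add: ev_fun_def e_fun_def)
  finally show ?thesis .
qed

section \<open>The E-module of components\<close>

lemma Theta_obj_iff: "v \<in> Theta_obj E sp P \<pi> x \<longleftrightarrow> (\<exists>p\<in>P. v = cact E sp \<pi> (e_fun E x) p)"
  unfolding Theta_obj_def by blast

lemma Theta_obj_subset: "Theta_obj E sp P \<pi> x \<subseteq> P"
  unfolding Theta_obj_def using cact_in_P[OF clinear_e_fun] by blast

lemma cact_e_idem: assumes x: "x \<in> Ob E" and p: "p \<in> P"
  shows "cact E sp \<pi> (e_fun E x) (cact E sp \<pi> (e_fun E x) p) = cact E sp \<pi> (e_fun E x) p"
  using cact_ev_ev[OF x x x x idm_in_Hom[OF x] idm_in_Hom[OF x] p] cmp_idm_left[OF x x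
      idm_in_Hom[OF x]] unfolding e_fun_eq_ev_fun by simp

lemma cact_e_on_Theta: assumes x: "x \<in> Ob E" and v: "v \<in> Theta_obj E sp P \<pi> x"
  shows "cact E sp \<pi> (e_fun E x) v = v"
  using v cact_e_idem[OF x] unfolding Theta_obj_iff by blast

lemma cact_e_orthogonal: assumes x: "x \<in> Ob E" and y: "y \<in> Ob E" and xy: "x \<noteq> y" and v: "v \<in>
    Theta_obj E sp P \<pi> x"
  shows "cact E sp \<pi> (e_fun E y) v = 0"
proof -
  obtain p where p: "p \<in> P" and vp: "v = cact E sp \<pi> (e_fun E x) p" using v unfolding Theta_obj_iff by blast
  show ?thesis using cact_ev_ev[OF x x y y idm_in_Hom[OF x] idm_in_Hom[OF y] p] xy
      unfolding vp e_fun_eq_ev_fun by simp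
qed

lemma cact_ev_in_Theta: assumes x: "x \<in> Ob E" and y: "y \<in> Ob E" and f: "f \<in> Hom E x y" and p: "p \<in> P"
  shows "cact E sp \<pi> (ev_fun x y f) p \<in> Theta_obj E sp P \<pi> y"
proof -
  have "cact E sp \<pi> (e_fun E y) (cact E sp \<pi> (ev_fun x y f) p) = cact E sp \<pi> (ev_fun x y f) p"
    using cact_ev_ev[OF x y y y f idm_in_Hom[OF y] p] cmp_idm_right[OF x y f]
        unfolding e_fun_eq_ev_fun by simp
  then show ?thesis unfolding Theta_obj_iff using cact_in_P[OF clinear_ev_fun p] by metis
qed

lemma cact_ev_e: assumes a: "a \<in> Ob E" and y: "y \<in> Ob E" and f: "f \<in> Hom E a y" and p: "p \<in> P"
  shows "cact E sp \<pi> (ev_fun a y f) (cact E sp \<pi> (e_fun E a) p) = cact E sp \<pi> (ev_fun a y f) p"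
  using cact_ev_ev[OF a a a y idm_in_Hom[OF a] f p] cmp_idm_left[OF a y f] unfolding e_fun_eq_ev_fun by simp

lemma eq_if_components_eq: assumes "q1 \<in> P" "q2 \<in> P" "\<And>y. y \<in> Ob E \<Longrightarrow> cact E sp \<pi> (e_fun E y) q1
    = cact E sp \<pi> (e_fun E y) q2"
  shows "q1 = q2"
proof -
  have "q1 - q2 = 0"
    by (rule eq_zero_if_components_zero[OF P_diff[OF assms(1,2)]])
      (simp add: cact_diff_right[OF clinear_e_fun assms(1,2)] assms(3))
  then show ?thesis by simp
qed

lemma Theta_obj_subspace: "V.subspace (Theta_obj E sp P \<pi> x)"
  unfolding V.subspace_def
proof (intro conjI ballI allI)
  show "0 \<in> Theta_obj E sp P \<pi> x" unfolding Theta_obj_iff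
      using cact_zero_right[OF clinear_e_fun] P_zero by metis
next
  fix u v assume u: "u \<in> Theta_obj E sp P \<pi> x" and v: "v \<in> Theta_obj E sp P \<pi> x"
  obtain p q where p: "p \<in> P" "u = cact E sp \<pi> (e_fun E x) p" and q: "q \<in> P" "v = cact E sp \<pi> (e_fun E x) q"
    using u v unfolding Theta_obj_iff by blast
  show "u + v \<in> Theta_obj E sp P \<pi> x" unfolding Theta_obj_iff
    using cact_add_right[OF clinear_e_fun p(1) q(1)] p q P_add by metis
next
  fix a u assume u: "u \<in> Theta_obj E sp P \<pi> x"
  obtain p where p: "p \<in> P" "u = cact E sp \<pi> (e_fun E x) p"
    using u unfolding Theta_obj_iff by blast
  show "sp a u \<in> Theta_obj E sp P \<pi> x" unfolding Theta_obj_iff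
    using cact_scale_right[OF clinear_e_fun p(1)] p P_scale by metis
qed

lemma cact_ev_linear_Hom:
  assumes x: "x \<in> Ob E" and y: "y \<in> Ob E" and p: "p \<in> P"
  shows "lin_on (hsc E) sp (Hom E x y) (\<lambda>f. cact E sp \<pi> (ev_fun x y f) p)"
  unfolding lin_on_def
proof (intro conjI ballI allI)
  fix f1 f2 assume f1: "f1 \<in> Hom E x y" and f2: "f2 \<in> Hom E x y"
  have "cact E sp \<pi> (ev_fun x y (f1 + f2)) p = cact E sp \<pi> (\<lambda>c. ev_fun x y f1 c + ev_fun x y f2 c) p"
    by (rule cact_cong) (simp add: ev_fun_def lin_on_add[OF CE_D(3)[OF _ x y] f1 f2])
  then show "cact E sp \<pi> (ev_fun x y (f1 + f2)) p
      = cact E sp \<pi> (ev_fun x y f1) p + cact E sp \<pi> (ev_fun x y f2) p"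
    using cact_add_left[OF clinear_ev_fun clinear_ev_fun p] by simp
next
  fix a f assume f: "f \<in> Hom E x y"
  have "cact E sp \<pi> (ev_fun x y (hsc E a f)) p = cact E sp \<pi> (\<lambda>c. a * ev_fun x y f c) p"
    by (rule cact_cong) (simp add: ev_fun_def lin_on_scale[OF CE_D(3)[OF _ x y] f])
  then show "cact E sp \<pi> (ev_fun x y (hsc E a f)) p = sp a (cact E sp \<pi> (ev_fun x y f) p)"
    using cact_scale_left[OF clinear_ev_fun p] by simp
qed

lemma is_Emod_Theta: "is_Emod E sp (Theta_obj E sp P \<pi>) (Theta_act E sp \<pi>)"
  unfolding is_Emod_def
proof (intro conjI ballI)
  show "vector_space sp" by (rule V.vector_space_axioms)
next
  fix x assume "x \<in> Ob E"
  show "V.subspace (Theta_obj E sp P \<pi> x)" by (rule Theta_obj_subspace)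
next
  fix x y f assume x: "x \<in> Ob E" and y: "y \<in> Ob E" and f: "f \<in> Hom E x y"
  show "lin_on sp sp (Theta_obj E sp P \<pi> x) (Theta_act E sp \<pi> x y f)"
    unfolding lin_on_def Theta_act_def
    using cact_add_right[OF clinear_ev_fun] cact_scale_right[OF clinear_ev_fun] Theta_obj_subset by blast
  show "Theta_act E sp \<pi> x y f ` Theta_obj E sp P \<pi> x \<subseteq> Theta_obj E sp P \<pi> y"
    unfolding Theta_act_def using cact_ev_in_Theta[OF x y f] Theta_obj_subset by blast
next
  fix x y v assume x: "x \<in> Ob E" and y: "y \<in> Ob E" and v: "v \<in> Theta_obj E sp P \<pi> x"
  show "lin_on (hsc E) sp (Hom E x y) (\<lambda>f. Theta_act E sp \<pi> x y f v)"
    unfolding Theta_act_def using cact_ev_linear_Hom[OF x y] v Theta_obj_subset by blast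
next
  fix x v assume x: "x \<in> Ob E" and v: "v \<in> Theta_obj E sp P \<pi> x"
  show "Theta_act E sp \<pi> x x (idm E x) v = v"
    unfolding Theta_act_def e_fun_eq_ev_fun[symmetric] by (rule cact_e_on_Theta[OF x v])
next
  fix x y z g h v assume x: "x \<in> Ob E" and y: "y \<in> Ob E" and z: "z \<in> Ob E"
    and g: "g \<in> Hom E x y" and h: "h \<in> Hom E y z" and v: "v \<in> Theta_obj E sp P \<pi> x"
  have vP: "v \<in> P" using v Theta_obj_subset by blast
  show "Theta_act E sp \<pi> x z (cmp E x y z g h) v = Theta_act E sp \<pi> y z h (Theta_act E sp \<pi> x y g v)"
    unfolding Theta_act_def using cact_ev_ev[OF x y y z g h vP] by simp
qed

end

section \<open>Full faithfulness\<close>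

locale contramodule_pair =
  A: contramodule E sp P \<pi> + B: contramodule E sq Q \<pi>'
  for E :: "('o, 'h::ab_group_add, 'k::field) klcat"
    and sp :: "'k \<Rightarrow> 'p::ab_group_add \<Rightarrow> 'p" and P \<pi>
    and sq :: "'k \<Rightarrow> 'q::ab_group_add \<Rightarrow> 'q" and Q \<pi>'
begin

lemma contra_hom_cact:
  assumes g: "contra_hom E sp P \<pi> sq Q \<pi>' g" and \<phi>: "clinear E \<phi>" and p: "p \<in> P"
  shows "g (cact E sp \<pi> \<phi> p) = cact E sq \<pi>' \<phi> (g p)"
proof -
  have gl: "lin_on sp sq P g" and gh: "\<forall>F\<in>HomC E sp P. g (\<pi> F) = \<pi>' (extC E (g \<circ> F))"
    using g unfolding contra_hom_def by blast+
  have "g (cact E sp \<pi> \<phi> p) = \<pi>' (extC E (g \<circ> rank_one E sp \<phi> p))"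
    unfolding cact_rank_one using gh A.rank_one_in_HomC[OF \<phi> p] by blast
  also have "extC E (g \<circ> rank_one E sp \<phi> p) = extC E (\<lambda>c. sq (\<phi> c) (g p))"
    by (rule extC_cong) (simp add: rank_one_apply lin_on_scale[OF gl p])
  finally show ?thesis unfolding cact_def .
qed

lemma Theta_contra_hom:
  assumes g: "contra_hom E sp P \<pi> sq Q \<pi>' g"
  shows "Emod_hom E sp (Theta_obj E sp P \<pi>) (Theta_act E sp \<pi>)
                   sq (Theta_obj E sq Q \<pi>') (Theta_act E sq \<pi>') (\<lambda>x. g)"
  unfolding Emod_hom_def
proof (intro conjI ballI)
  have gl: "lin_on sp sq P g" and gP: "g ` P \<subseteq> Q"
    using g unfolding contra_hom_def by blast+
  fix x assume x: "x \<in> Ob E"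
  show "lin_on sp sq (Theta_obj E sp P \<pi> x) g"
    using gl A.Theta_obj_subset unfolding lin_on_def by blast
  show "g ` Theta_obj E sp P \<pi> x \<subseteq> Theta_obj E sq Q \<pi>' x"
  proof
    fix w assume "w \<in> g ` Theta_obj E sp P \<pi> x"
    then obtain v where "v \<in> Theta_obj E sp P \<pi> x" "w = g v" by blast
    then obtain p where p: "p \<in> P" "w = g (cact E sp \<pi> (e_fun E x) p)"
      unfolding A.Theta_obj_iff by blast
    then have "w = cact E sq \<pi>' (e_fun E x) (g p)" using contra_hom_cact[OF g clinear_e_fun] by simp
    then show "w \<in> Theta_obj E sq Q \<pi>' x" unfolding B.Theta_obj_iff using gP p(1) by blast
  qed
next
  fix x y f v assume "v \<in> Theta_obj E sp P \<pi> x"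
  then show "g (Theta_act E sp \<pi> x y f v) = Theta_act E sq \<pi>' x y f (g v)"
    unfolding Theta_act_def using contra_hom_cact[OF g clinear_ev_fun] A.Theta_obj_subset by blast
qed

lemma Theta_faithful:
  assumes g: "contra_hom E sp P \<pi> sq Q \<pi>' g" and g': "contra_hom E sp P \<pi> sq Q \<pi>' g'"
    and agree: "\<forall>x\<in>Ob E. \<forall>p\<in>Theta_obj E sp P \<pi> x. g p = g' p"
    and p: "p \<in> P"
  shows "g p = g' p"
proof (rule B.eq_if_components_eq)
  show "g p \<in> Q" "g' p \<in> Q" using g g' p unfolding contra_hom_def by blast+
  fix y assume y: "y \<in> Ob E"
  have "cact E sp \<pi> (e_fun E y) p \<in> Theta_obj E sp P \<pi> y"
    unfolding A.Theta_obj_iff using p by blast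
  then have "g (cact E sp \<pi> (e_fun E y) p) = g' (cact E sp \<pi> (e_fun E y) p)"
    using agree y by blast
  then show "cact E sq \<pi>' (e_fun E y) (g p) = cact E sq \<pi>' (e_fun E y) (g' p)"
    by (simp add: contra_hom_cact[OF g clinear_e_fun p, symmetric] contra_hom_cact[OF g'
        clinear_e_fun p, symmetric])
qed

end

locale Theta_Emod_hom = contramodule_pair E sp P \<pi> sq Q \<pi>'
  for E :: "('o, 'h::ab_group_add, 'k::field) klcat"
    and sp :: "'k \<Rightarrow> 'p::ab_group_add \<Rightarrow> 'p" and P \<pi>
    and sq :: "'k \<Rightarrow> 'q::ab_group_add \<Rightarrow> 'q" and Q \<pi>' +
  fixes \<eta> :: "'o \<Rightarrow> 'p \<Rightarrow> 'q"
  assumes eta: "Emod_hom E sp (Theta_obj E sp P \<pi>) (Theta_act E sp \<pi>)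
                   sq (Theta_obj E sq Q \<pi>') (Theta_act E sq \<pi>') \<eta>"
begin

definition lift :: "'p \<Rightarrow> 'q" where
  "lift p = \<pi>' (diag_hom E sq (\<lambda>x. \<eta> x (cact E sp \<pi> (e_fun E x) p)))"

lemma eta_linear: "x \<in> Ob E \<Longrightarrow> lin_on sp sq (Theta_obj E sp P \<pi> x) (\<eta> x)"
  using eta unfolding Emod_hom_def by blast

lemma eta_in_Theta: "x \<in> Ob E \<Longrightarrow> v \<in> Theta_obj E sp P \<pi> x \<Longrightarrow> \<eta> x v \<in> Theta_obj E sq Q \<pi>' x"
  using eta unfolding Emod_hom_def by blast

lemma eta_act:
  "x \<in> Ob E \<Longrightarrow> y \<in> Ob E \<Longrightarrow> f \<in> Hom E x y \<Longrightarrow> v \<in> Theta_obj E sp P \<pi> x \<Longrightarrow>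
    \<eta> y (Theta_act E sp \<pi> x y f v) = Theta_act E sq \<pi>' x y f (\<eta> x v)"
  using eta unfolding Emod_hom_def by blast

lemma eta_sum:
  assumes "y \<in> Ob E" "\<And>i. i \<in> I \<Longrightarrow> v i \<in> Theta_obj E sp P \<pi> y"
  shows "\<eta> y (\<Sum>i\<in>I. v i) = (\<Sum>i\<in>I. \<eta> y (v i))"
  by (rule lin_on_sum[OF eta_linear[OF assms(1)]])
    (use A.V.subspace_0[OF A.Theta_obj_subspace] A.V.subspace_add[OF A.Theta_obj_subspace] assms(2)
      in blast)+

lemma cact_e_in_Theta: "p \<in> P \<Longrightarrow> cact E sp \<pi> (e_fun E x) p \<in> Theta_obj E sp P \<pi> x"
  unfolding A.Theta_obj_iff by blast

lemma lift_in_Q: "p \<in> P \<Longrightarrow> lift p \<in> Q"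
  unfolding lift_def
  using eta_in_Theta[OF _ cact_e_in_Theta] B.Theta_obj_subset
  by (blast intro: B.pi_in_P B.diag_hom_in_HomC)

lemma cact_e_lift:
  assumes y: "y \<in> Ob E" and p: "p \<in> P"
  shows "cact E sq \<pi>' (e_fun E y) (lift p) = \<eta> y (cact E sp \<pi> (e_fun E y) p)"
proof -
  have "cact E sq \<pi>' (e_fun E y) (lift p) = cact E sq \<pi>' (e_fun E y) (\<eta> y (cact E sp \<pi> (e_fun E y) p))"
    unfolding lift_def
    by (rule B.cact_e_pi_diag_hom[OF y])
      (use eta_in_Theta[OF _ cact_e_in_Theta[OF p]] B.Theta_obj_subset in blast)
  also have "\<dots> = \<eta> y (cact E sp \<pi> (e_fun E y) p)"
    by (rule B.cact_e_on_Theta[OF y eta_in_Theta[OF y cact_e_in_Theta[OF p]]])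
  finally show ?thesis .
qed

lemma lift_linear: "lin_on sp sq P lift"
  unfolding lin_on_def
proof (intro conjI ballI allI)
  fix u v assume u: "u \<in> P" and v: "v \<in> P"
  show "lift (u + v) = lift u + lift v"
  proof (rule B.eq_if_components_eq[OF lift_in_Q[OF A.P_add[OF u v]] B.P_add[OF lift_in_Q[OF u]
      lift_in_Q[OF v]]])
    fix y assume y: "y \<in> Ob E"
    have "cact E sq \<pi>' (e_fun E y) (lift (u + v))
        = \<eta> y (cact E sp \<pi> (e_fun E y) u + cact E sp \<pi> (e_fun E y) v)"
      using cact_e_lift[OF y A.P_add[OF u v]] A.cact_add_right[OF clinear_e_fun u v] by simp
    also have "\<dots> = \<eta> y (cact E sp \<pi> (e_fun E y) u) + \<eta> y (cact E sp \<pi> (e_fun E y) v)"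
      by (rule lin_on_add[OF eta_linear[OF y] cact_e_in_Theta[OF u] cact_e_in_Theta[OF v]])
    also have "\<dots> = cact E sq \<pi>' (e_fun E y) (lift u + lift v)"
      using B.cact_add_right[OF clinear_e_fun lift_in_Q[OF u] lift_in_Q[OF v]] cact_e_lift[OF y u]
        cact_e_lift[OF y v] by simp
    finally show "cact E sq \<pi>' (e_fun E y) (lift (u + v)) = cact E sq \<pi>' (e_fun E y) (lift u + lift v)" .
  qed
next
  fix a u assume u: "u \<in> P"
  show "lift (sp a u) = sq a (lift u)"
  proof (rule B.eq_if_components_eq[OF lift_in_Q[OF A.P_scale[OF u]] B.P_scale[OF lift_in_Q[OF u]]])
    fix y assume y: "y \<in> Ob E"
    have "cact E sq \<pi>' (e_fun E y) (lift (sp a u)) = \<eta> y (sp a (cact E sp \<pi> (e_fun E y) u))"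
      using cact_e_lift[OF y A.P_scale[OF u]] A.cact_scale_right[OF clinear_e_fun u] by simp
    also have "\<dots> = sq a (\<eta> y (cact E sp \<pi> (e_fun E y) u))"
      by (rule lin_on_scale[OF eta_linear[OF y] cact_e_in_Theta[OF u]])
    also have "\<dots> = cact E sq \<pi>' (e_fun E y) (sq a (lift u))"
      using B.cact_scale_right[OF clinear_e_fun lift_in_Q[OF u]] cact_e_lift[OF y u] by simp
    finally show "cact E sq \<pi>' (e_fun E y) (lift (sp a u)) = cact E sq \<pi>' (e_fun E y) (sq a (lift u))" .
  qed
qed

lemma lift_comp_in_HomC:
  assumes F: "F \<in> HomC E sp P" shows "extC E (lift \<circ> F) \<in> HomC E sq Q"
proof (rule B.HomC_I)
  have Fl: "lin_on cscale sp (CE E) F" and FP: "\<And>c. c \<in> CE E \<Longrightarrow> F c \<in> P"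
    using A.HomC_D[OF F] by blast+
  show "lin_on cscale sq (CE E) (extC E (lift \<circ> F))"
    unfolding lin_on_def extC_def
    using A.CE_add A.CE_scale lin_on_add[OF Fl] lin_on_scale[OF Fl] lin_on_add[OF lift_linear]
      lin_on_scale[OF lift_linear] FP
    by simp
qed (auto simp: extC_def intro: lift_in_Q A.HomC_D(2)[OF F])

lemma eta_cact_ev:
  assumes a: "a \<in> Ob E" and y: "y \<in> Ob E" and f: "f \<in> Hom E a y" and p: "p \<in> P"
  shows "\<eta> y (cact E sp \<pi> (ev_fun a y f) p) = cact E sq \<pi>' (ev_fun a y f) (lift p)"
proof -
  have "\<eta> y (cact E sp \<pi> (ev_fun a y f) p) = \<eta> y (Theta_act E sp \<pi> a y f (cact E sp \<pi> (e_fun E a) p))"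
    unfolding Theta_act_def using A.cact_ev_e[OF a y f p] by simp
  also have "\<dots> = Theta_act E sq \<pi>' a y f (\<eta> a (cact E sp \<pi> (e_fun E a) p))"
    by (rule eta_act[OF a y f cact_e_in_Theta[OF p]])
  also have "\<dots> = cact E sq \<pi>' (ev_fun a y f) (lift p)"
    unfolding Theta_act_def cact_e_lift[OF a p, symmetric] by (rule B.cact_ev_e[OF a y f lift_in_Q[OF p]])
  finally show ?thesis .
qed

lemma lift_pi:
  assumes F: "F \<in> HomC E sp P"
  shows "lift (\<pi> F) = \<pi>' (extC E (lift \<circ> F))"
proof (rule B.eq_if_components_eq[OF lift_in_Q[OF A.pi_in_P[OF F]] B.pi_in_P[OF lift_comp_in_HomC[OF F]]])
  fix y assume y: "y \<in> Ob E"
  let ?T = "lower_objs E y" and ?F = "\<lambda>a \<beta>. F (cinj a y (hdual E a y \<beta>))"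
  have T: "finite ?T" "?T \<subseteq> Ob E" "?T \<subseteq> ?T"
    using A.finite_lower_objs[OF y] by (auto simp: lower_objs_def)
  have FP: "?F a \<beta> \<in> P" if "a \<in> ?T" for a \<beta>
    using A.HomC_D(2)[OF F A.cinj_hdual_in_CE] that T(2) y by blast
  have inM: "cact E sp \<pi> (ev_fun a y \<beta>) (?F a \<beta>) \<in> Theta_obj E sp P \<pi> y"
    if "a \<in> ?T" "\<beta> \<in> hbasis E a y" for a \<beta>
    using A.cact_ev_in_Theta[OF _ y A.hbasis_in_Hom FP] that T(2) y by blast
  have "cact E sq \<pi>' (e_fun E y) (lift (\<pi> F))
      = \<eta> y (\<Sum>a\<in>?T. \<Sum>\<beta>\<in>hbasis E a y. cact E sp \<pi> (ev_fun a y \<beta>) (?F a \<beta>))"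
    using cact_e_lift[OF y A.pi_in_P[OF F]] A.cact_e_pi[OF y F T] by simp
  also have "\<dots> = (\<Sum>a\<in>?T. \<Sum>\<beta>\<in>hbasis E a y. \<eta> y (cact E sp \<pi> (ev_fun a y \<beta>) (?F a \<beta>)))"
    using inM by (simp add: eta_sum[OF y] A.V.subspace_sum[OF A.Theta_obj_subspace])
  also have "\<dots> = (\<Sum>a\<in>?T. \<Sum>\<beta>\<in>hbasis E a y. cact E sq \<pi>' (ev_fun a y \<beta>) (extC E (lift \<circ> F) (cinj a y
      (hdual E a y \<beta>))))"
    using T(2) y FP eta_cact_ev A.hbasis_in_Hom A.cinj_hdual_in_CE
    by (intro sum.cong refl) (auto simp: extC_def)
  also have "\<dots> = cact E sq \<pi>' (e_fun E y) (\<pi>' (extC E (lift \<circ> F)))"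
    by (rule B.cact_e_pi[OF y lift_comp_in_HomC[OF F] T, symmetric])
  finally show "cact E sq \<pi>' (e_fun E y) (lift (\<pi> F)) = cact E sq \<pi>' (e_fun E y) (\<pi>' (extC E (lift \<circ> F)))" .
qed

lemma contra_hom_lift: "contra_hom E sp P \<pi> sq Q \<pi>' lift"
  unfolding contra_hom_def using lift_linear lift_in_Q lift_pi by blast

lemma lift_extends_eta:
  assumes x: "x \<in> Ob E" and p: "p \<in> Theta_obj E sp P \<pi> x"
  shows "lift p = \<eta> x p"
proof -
  have pP: "p \<in> P" using p A.Theta_obj_subset by blast
  have etaQ: "\<eta> x p \<in> Theta_obj E sq Q \<pi>' x" by (rule eta_in_Theta[OF x p])
  show ?thesis
  proof (rule B.eq_if_components_eq[OF lift_in_Q[OF pP]])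
    show "\<eta> x p \<in> Q" using etaQ B.Theta_obj_subset by blast
    fix y assume y: "y \<in> Ob E"
    show "cact E sq \<pi>' (e_fun E y) (lift p) = cact E sq \<pi>' (e_fun E y) (\<eta> x p)"
    proof (cases "y = x")
      case True
      then show ?thesis
        using cact_e_lift[OF y pP] A.cact_e_on_Theta[OF x p] B.cact_e_on_Theta[OF x etaQ] by simp
    next
      case False
      have "\<eta> y 0 = 0" using lin_on_zero[OF eta_linear[OF y] A.V.subspace_0[OF A.Theta_obj_subspace]] .
      then show ?thesis
        using cact_e_lift[OF y pP] A.cact_e_orthogonal[OF x y _ p] B.cact_e_orthogonal[OF x y _ etaQ] False
        by auto
    qed
  qed
qed

end

lemma Theta_full:
  assumes "contramodule E sp P \<pi>" and "contramodule E sq Q \<pi>'"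
    and "Emod_hom E sp (Theta_obj E sp P \<pi>) (Theta_act E sp \<pi>)
                   sq (Theta_obj E sq Q \<pi>') (Theta_act E sq \<pi>') \<eta>"
  shows "\<exists>g. contra_hom E sp P \<pi> sq Q \<pi>' g \<and> (\<forall>x\<in>Ob E. \<forall>p\<in>Theta_obj E sp P \<pi> x. g p = \<eta> x p)"
proof -
  interpret Theta_Emod_hom E sp P \<pi> sq Q \<pi>' \<eta>
    using assms by (simp add: Theta_Emod_hom_def Theta_Emod_hom_axioms_def contramodule_pair_def)
  show ?thesis using contra_hom_lift lift_extends_eta by blast
qed

section \<open>Essential surjectivity\<close>

locale Emodule = lower_finite_kcat E for E :: "('o, 'h::ab_group_add, 'k::field) klcat" +
  fixes sm :: "'k \<Rightarrow> 'm::ab_group_add \<Rightarrow> 'm" and M :: "'o \<Rightarrow> 'm set" and \<rho> :: "'o \<Rightarrow> 'o \<Rightarrow> 'h \<Rightarrow> 'm \<Rightarrow> 'm"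
  assumes Emod: "is_Emod E sm M \<rho>"
begin

sublocale W: vector_space sm
  using Emod unfolding is_Emod_def by simp

lemma M_subspace: "x \<in> Ob E \<Longrightarrow> W.subspace (M x)"
  using Emod unfolding is_Emod_def by simp

lemma M_zero: "x \<in> Ob E \<Longrightarrow> 0 \<in> M x" using W.subspace_0[OF M_subspace] .
lemma M_add: "x \<in> Ob E \<Longrightarrow> u \<in> M x \<Longrightarrow> v \<in> M x \<Longrightarrow> u + v \<in> M x" using W.subspace_add[OF M_subspace] .
lemma M_scale: "x \<in> Ob E \<Longrightarrow> u \<in> M x \<Longrightarrow> sm a u \<in> M x" using W.subspace_scale[OF M_subspace] .
lemma M_sum: "x \<in> Ob E \<Longrightarrow> (\<And>i. i \<in> I \<Longrightarrow> f i \<in> M x) \<Longrightarrow> sum f I \<in> M x"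
  using W.subspace_sum[OF M_subspace] .

lemma rho_linear: "x \<in> Ob E \<Longrightarrow> y \<in> Ob E \<Longrightarrow> f \<in> Hom E x y \<Longrightarrow> lin_on sm sm (M x) (\<rho> x y f)"
  using Emod unfolding is_Emod_def by simp

lemma rho_in: "x \<in> Ob E \<Longrightarrow> y \<in> Ob E \<Longrightarrow> f \<in> Hom E x y \<Longrightarrow> v \<in> M x \<Longrightarrow> \<rho> x y f v \<in> M y"
  using Emod unfolding is_Emod_def by blast

lemma rho_linear_Hom: "x \<in> Ob E \<Longrightarrow> y \<in> Ob E \<Longrightarrow> v \<in> M x \<Longrightarrow> lin_on (hsc E) sm (Hom E x y) (\<lambda>f. \<rho> x y f v)"
  using Emod unfolding is_Emod_def by simp

lemma rho_id: "x \<in> Ob E \<Longrightarrow> v \<in> M x \<Longrightarrow> \<rho> x x (idm E x) v = v"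
  using Emod unfolding is_Emod_def by simp

lemma rho_comp: "x \<in> Ob E \<Longrightarrow> y \<in> Ob E \<Longrightarrow> z \<in> Ob E \<Longrightarrow> g \<in> Hom E x y \<Longrightarrow> h \<in> Hom E y z \<Longrightarrow> v \<in> M x
   \<Longrightarrow> \<rho> x z (cmp E x y z g h) v = \<rho> y z h (\<rho> x y g v)"
  using Emod unfolding is_Emod_def by simp

lemma rho_zero: "x \<in> Ob E \<Longrightarrow> y \<in> Ob E \<Longrightarrow> f \<in> Hom E x y \<Longrightarrow> \<rho> x y f 0 = 0"
  using lin_on_zero[OF rho_linear M_zero] by blast

lemma rho_sum: assumes "x \<in> Ob E" "y \<in> Ob E" "f \<in> Hom E x y" "\<And>i. i \<in> I \<Longrightarrow> v i \<in> M x"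
  shows "\<rho> x y f (\<Sum>i\<in>I. v i) = (\<Sum>i\<in>I. \<rho> x y f (v i))"
  by (rule lin_on_sum[OF rho_linear[OF assms(1-3)]]) (use M_zero[OF assms(1)] M_add[OF assms(1)]
      assms(4) in blast)+

lemma rho_hbasis_expansion: assumes x: "x \<in> Ob E" and y: "y \<in> Ob E" and u: "u \<in> Hom E x y" and v: "v \<in> M x"
  shows "(\<Sum>\<delta>\<in>hbasis E x y. sm (hdual E x y \<delta> u) (\<rho> x y \<delta> v)) = \<rho> x y u v"
proof -
  have \<delta>: "hsc E (hdual E x y \<delta> u) \<delta> \<in> Hom E x y" if "\<delta> \<in> hbasis E x y" for \<delta>
    using Hom_scale[OF x y hbasis_in_Hom[OF x y that]] .
  have "\<rho> x y u v = \<rho> x y (\<Sum>\<delta>\<in>hbasis E x y. hsc E (hdual E x y \<delta> u) \<delta>) v"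
    using hbasis_expansion[OF x y u] by simp
  also have "\<dots> = (\<Sum>\<delta>\<in>hbasis E x y. \<rho> x y (hsc E (hdual E x y \<delta> u) \<delta>) v)"
    by (rule lin_on_sum[OF rho_linear_Hom[OF x y v] zero_in_Hom[OF x y] Hom_add[OF x y] \<delta>])
  also have "\<dots> = (\<Sum>\<delta>\<in>hbasis E x y. sm (hdual E x y \<delta> u) (\<rho> x y \<delta> v))"
    by (rule sum.cong[OF refl]) (rule lin_on_scale[OF rho_linear_Hom[OF x y v] hbasis_in_Hom[OF x y]])
  finally show ?thesis by simp
qed

lemma rho_hdual_sum: assumes x: "x \<in> Ob E" and y: "y \<in> Ob E" and u: "u \<in> Hom E x y" and v: "v \<in> M x"
  shows "(\<Sum>\<delta>\<in>hbasis E x y. \<rho> x y \<delta> (sm (hdual E x y \<delta> u) v)) = \<rho> x y u v"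
proof -
  have "(\<Sum>\<delta>\<in>hbasis E x y. \<rho> x y \<delta> (sm (hdual E x y \<delta> u) v))
      = (\<Sum>\<delta>\<in>hbasis E x y. sm (hdual E x y \<delta> u) (\<rho> x y \<delta> v))"
    by (rule sum.cong[OF refl]) (rule lin_on_scale[OF rho_linear[OF x y hbasis_in_Hom[OF x y]] v])
  then show ?thesis using rho_hbasis_expansion[OF x y u v] by simp
qed

definition prodM :: "('o \<Rightarrow> 'm) set" where
  "prodM = {p. (\<forall>x\<in>Ob E. p x \<in> M x) \<and> (\<forall>x. x \<notin> Ob E \<longrightarrow> p x = 0)}"

(* The formula is forced by contramodule.cact_e_pi: in every contramodule the
   e_y-component of pi F is given by the same finite sum. *)
definition prod_pi :: "(('o \<Rightarrow> 'o \<Rightarrow> 'h \<Rightarrow> 'k) \<Rightarrow> 'o \<Rightarrow> 'm) \<Rightarrow> 'o \<Rightarrow> 'm" where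
  "prod_pi F = (\<lambda>y. if y \<in> Ob E
     then (\<Sum>a\<in>lower_objs E y. \<Sum>\<beta>\<in>hbasis E a y. \<rho> a y \<beta> (F (cinj a y (hdual E a y \<beta>)) a)) else 0)"

definition single :: "'o \<Rightarrow> 'm \<Rightarrow> 'o \<Rightarrow> 'm" where
  "single x v = (\<lambda>z. if z = x then v else 0)"

lemma prodM_D: "p \<in> prodM \<Longrightarrow> x \<in> Ob E \<Longrightarrow> p x \<in> M x" "p \<in> prodM \<Longrightarrow> x \<notin> Ob E \<Longrightarrow> p x = 0"
  unfolding prodM_def by blast+

lemma prodM_subspace: "module.subspace (pscale sm) prodM"
  unfolding module.subspace_def[OF vector_space_pscale[OF W.vector_space_axioms, unfolded
      module_iff_vector_space[symmetric]]]
  unfolding prodM_def pscale_def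
  by (auto simp: M_zero M_add M_scale)

lemma single_in_prodM: "x \<in> Ob E \<Longrightarrow> v \<in> M x \<Longrightarrow> single x v \<in> prodM"
  unfolding prodM_def single_def using M_zero by auto

lemma HomC_prodM_apply:
  assumes "F \<in> HomC E (pscale sm) prodM" "a \<in> Ob E" "y \<in> Ob E"
  shows "F (cinj a y (hdual E a y \<beta>)) a \<in> M a"
  using assms cinj_hdual_in_CE[OF assms(2,3)] unfolding HomC_def prodM_def by blast

lemma prod_pi_eq_sum: assumes y: "y \<in> Ob E" and T: "finite T" "T \<subseteq> Ob E" "lower_objs E y \<subseteq> T"
  shows "prod_pi F y = (\<Sum>a\<in>T. \<Sum>\<beta>\<in>hbasis E a y. \<rho> a y \<beta> (F (cinj a y (hdual E a y \<beta>)) a))"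
  unfolding prod_pi_def using y
proof (simp, intro sum.mono_neutral_left[OF T(1) T(3)] ballI)
  fix a assume a: "a \<in> T - lower_objs E y"
  then have "a \<in> Ob E" "Hom E a y = {0}" using T(2) unfolding lower_objs_def by auto
  then show "(\<Sum>\<beta>\<in>hbasis E a y. \<rho> a y \<beta> (F (cinj a y (hdual E a y \<beta>)) a)) = 0"
    using hbasis_empty[OF _ y] by simp
qed

lemma prod_pi_zero_entries:
  assumes "\<And>a \<beta>. a \<in> Ob E \<Longrightarrow> F (cinj a y (hdual E a y \<beta>)) a = 0"
  shows "prod_pi F y = 0"
  unfolding prod_pi_def lower_objs_def using assms rho_zero hbasis_in_Hom by simp

lemma prod_pi_single_entry:
  assumes y: "y \<in> Ob E" and x: "x \<in> Ob E" and u: "u \<in> Hom E x y" and v: "v \<in> M x"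
    and F: "\<And>a \<beta>. a \<in> Ob E \<Longrightarrow> F (cinj a y (hdual E a y \<beta>)) a = (if a = x then sm (hdual E a y \<beta> u) v else 0)"
  shows "prod_pi F y = \<rho> x y u v"
proof -
  define T where "T = insert x (lower_objs E y)"
  have T: "finite T" "T \<subseteq> Ob E" "lower_objs E y \<subseteq> T"
    unfolding T_def using finite_lower_objs[OF y] x by (auto simp: lower_objs_def)
  have "prod_pi F y = (\<Sum>a\<in>T. \<Sum>\<beta>\<in>hbasis E a y. \<rho> a y \<beta> (F (cinj a y (hdual E a y \<beta>)) a))"
    by (rule prod_pi_eq_sum[OF y T])
  also have "\<dots> = (\<Sum>a\<in>T. if a = x then \<Sum>\<beta>\<in>hbasis E x y. \<rho> x y \<beta> (sm (hdual E x y \<beta> u) v) else 0)"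
    using T(2) F rho_zero[OF _ y hbasis_in_Hom[OF _ y]] by (intro sum.cong refl) auto
  also have "\<dots> = \<rho> x y u v"
    using T(1) rho_hdual_sum[OF x y u v] by (simp add: T_def)
  finally show ?thesis .
qed

lemma prod_pi_in_prodM: assumes F: "F \<in> HomC E (pscale sm) prodM" shows "prod_pi F \<in> prodM"
  unfolding prodM_def prod_pi_def lower_objs_def
  using HomC_prodM_apply[OF F] rho_in hbasis_in_Hom by (auto intro!: M_sum)

lemma prod_pi_linear: "lin_on (fscale (pscale sm)) (pscale sm) (HomC E (pscale sm) prodM) prod_pi"
  unfolding lin_on_def
proof (intro conjI ballI allI ext)
  fix F G y assume F: "F \<in> HomC E (pscale sm) prodM" and G: "G \<in> HomC E (pscale sm) prodM"
  have "\<rho> a y \<beta> ((F + G) (cinj a y (hdual E a y \<beta>)) a)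
      = \<rho> a y \<beta> (F (cinj a y (hdual E a y \<beta>)) a) + \<rho> a y \<beta> (G (cinj a y (hdual E a y \<beta>)) a)"
    if "y \<in> Ob E" "a \<in> lower_objs E y" "\<beta> \<in> hbasis E a y" for a \<beta>
    using that lin_on_add[OF rho_linear HomC_prodM_apply[OF F] HomC_prodM_apply[OF G]] hbasis_in_Hom
    by (simp add: lower_objs_def)
  then show "prod_pi (F + G) y = (prod_pi F + prod_pi G) y"
    by (simp add: prod_pi_def sum.distrib)
next
  fix k F y assume F: "F \<in> HomC E (pscale sm) prodM"
  have "\<rho> a y \<beta> (fscale (pscale sm) k F (cinj a y (hdual E a y \<beta>)) a)
      = sm k (\<rho> a y \<beta> (F (cinj a y (hdual E a y \<beta>)) a))"
    if "y \<in> Ob E" "a \<in> lower_objs E y" "\<beta> \<in> hbasis E a y" for a \<beta>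
    using that lin_on_scale[OF rho_linear HomC_prodM_apply[OF F]] hbasis_in_Hom
    by (simp add: lower_objs_def fscale_def pscale_def)
  then show "prod_pi (fscale (pscale sm) k F) y = pscale sm k (prod_pi F) y"
    by (simp add: prod_pi_def pscale_def W.scale_sum_right)
qed

lemma prod_pi_counit:
  assumes p: "p \<in> prodM" shows "prod_pi (extC E (\<lambda>c. pscale sm (coalg_eps E c) p)) = p"
proof
  fix y
  show "prod_pi (extC E (\<lambda>c. pscale sm (coalg_eps E c) p)) y = p y"
  proof (cases "y \<in> Ob E")
    case True
    have "prod_pi (extC E (\<lambda>c. pscale sm (coalg_eps E c) p)) y = \<rho> y y (idm E y) (p y)"
      by (rule prod_pi_single_entry[OF True True idm_in_Hom[OF True] prodM_D(1)[OF p True]])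
        (simp add: extC_def cinj_hdual_in_CE[OF _ True] coalg_eps_cinj_hdual[OF _ True] pscale_def)
    then show ?thesis using rho_id[OF True prodM_D(1)[OF p True]] by simp
  qed (simp add: prod_pi_def prodM_D(2)[OF p])
qed

lemma prod_cact_ev:
  assumes x: "x \<in> Ob E" and y: "y \<in> Ob E" and f: "f \<in> Hom E x y" and p: "p \<in> prodM"
  shows "cact E (pscale sm) prod_pi (ev_fun x y f) p = single y (\<rho> x y f (p x))"
proof
  fix z
  have entry: "extC E (\<lambda>c. pscale sm (ev_fun x y f c) p) (cinj a z (hdual E a z \<beta>)) a
      = (if a = x \<and> z = y then sm (hdual E a z \<beta> f) (p a) else 0)" if "a \<in> Ob E" "z \<in> Ob E" for a \<beta>
    using that by (simp add: extC_def cinj_hdual_in_CE pscale_def ev_fun_cinj)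
  show "cact E (pscale sm) prod_pi (ev_fun x y f) p z = single y (\<rho> x y f (p x)) z"
    unfolding cact_def single_def
  proof (cases "z = y")
    case True
    then show "prod_pi (extC E (\<lambda>c. pscale sm (ev_fun x y f c) p)) z = (if z = y then \<rho> x y f (p x) else 0)"
      using prod_pi_single_entry[OF y x f prodM_D(1)[OF p x]] entry y by simp
  next
    case False
    have "prod_pi (extC E (\<lambda>c. pscale sm (ev_fun x y f c) p)) z = 0"
    proof (cases "z \<in> Ob E")
      case True
      then show ?thesis using False by (intro prod_pi_zero_entries) (simp add: entry)
    qed (simp add: prod_pi_def)
    then show "prod_pi (extC E (\<lambda>c. pscale sm (ev_fun x y f c) p)) z = (if z = y then \<rho> x y f (p x) else 0)"
      using False by simp
  qed
qed

lemma prod_pi_coassoc_left: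
  assumes y: "y \<in> Ob E" and f_in: "\<forall>c\<in>CE E. f c \<in> HomC E (pscale sm) prodM"
  shows "prod_pi (extC E (\<lambda>c. prod_pi (f c))) y
    = (\<Sum>z\<in>below E y. \<Sum>\<beta>\<in>hbasis E z y. \<Sum>w\<in>below E y. \<Sum>\<gamma>\<in>hbasis E w z.
         \<rho> z y \<beta> (\<rho> w z \<gamma> (f (cinj z y (hdual E z y \<beta>)) (cinj w z (hdual E w z \<gamma>)) w)))"
proof -
  let ?S = "below E y"
  have S: "finite ?S" "?S \<subseteq> Ob E" "lower_objs E y \<subseteq> ?S"
    using finite_below[OF y] below_subset lower_objs_subset_below[OF y] by auto
  have entry: "\<rho> z y \<beta> (extC E (\<lambda>c. prod_pi (f c)) (cinj z y (hdual E z y \<beta>)) z)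
      = (\<Sum>w\<in>?S. \<Sum>\<gamma>\<in>hbasis E w z.
           \<rho> z y \<beta> (\<rho> w z \<gamma> (f (cinj z y (hdual E z y \<beta>)) (cinj w z (hdual E w z \<gamma>)) w)))"
    if z: "z \<in> ?S" and \<beta>: "\<beta> \<in> hbasis E z y" for z \<beta>
  proof -
    have zO: "z \<in> Ob E" using z S(2) by blast
    have F: "f (cinj z y (hdual E z y \<beta>)) \<in> HomC E (pscale sm) prodM"
      using f_in cinj_hdual_in_CE[OF zO y] by blast
    have v: "\<rho> w z \<gamma> (f (cinj z y (hdual E z y \<beta>)) (cinj w z (hdual E w z \<gamma>)) w) \<in> M z"
      if "w \<in> ?S" "\<gamma> \<in> hbasis E w z" for w \<gamma>
      using that S(2) rho_in[OF _ zO hbasis_in_Hom[OF _ zO] HomC_prodM_apply[OF F _ zO]] by blast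
    have "extC E (\<lambda>c. prod_pi (f c)) (cinj z y (hdual E z y \<beta>)) z
        = (\<Sum>w\<in>?S. \<Sum>\<gamma>\<in>hbasis E w z. \<rho> w z \<gamma> (f (cinj z y (hdual E z y \<beta>)) (cinj w z (hdual E w z \<gamma>)) w))"
      using cinj_hdual_in_CE[OF zO y] prod_pi_eq_sum[OF zO S(1,2) lower_objs_subset_below_trans[OF z]]
      by (simp add: extC_def)
    then show ?thesis
      using v by (simp add: rho_sum[OF zO y hbasis_in_Hom[OF zO y \<beta>]] M_sum[OF zO])
  qed
  show ?thesis
    unfolding prod_pi_eq_sum[OF y S] by (intro sum.cong refl) (simp add: entry)
qed

lemma comult_comp_cinj_hdual_apply:
  assumes y: "y \<in> Ob E" and w: "w \<in> below E y" and \<delta>: "\<delta> \<in> hbasis E w y"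
  shows "comult_comp E (pscale sm) f (cinj w y (hdual E w y \<delta>)) w
    = (\<Sum>m\<in>below E y. \<Sum>b\<in>hbasis E w m. \<Sum>b'\<in>hbasis E m y.
        sm (hdual E w y \<delta> (cmp E w m y b b')) (f (cinj m y (hdual E m y b')) (cinj w m (hdual E w m b)) w))"
proof -
  have wO: "w \<in> Ob E" using w below_subset by blast
  have "comult_comp E (pscale sm) f (cinj w y (hdual E w y \<delta>)) w
      = (\<Sum>m\<in>mid E w y. \<Sum>b\<in>hbasis E w m. \<Sum>b'\<in>hbasis E m y.
          sm (hdual E w y \<delta> (cmp E w m y b b')) (f (cinj m y (hdual E m y b')) (cinj w m (hdual E w m b)) w))"
    unfolding comult_comp_def csupp_cinj_hdual[OF wO y \<delta>] by (simp add: cinj_def sum_fun pscale_def)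
  also have "\<dots> = (\<Sum>m\<in>below E y. \<Sum>b\<in>hbasis E w m. \<Sum>b'\<in>hbasis E m y.
          sm (hdual E w y \<delta> (cmp E w m y b b')) (f (cinj m y (hdual E m y b')) (cinj w m (hdual E w m b)) w))"
  proof (rule sum.mono_neutral_left[OF finite_below[OF y] mid_subset_below[OF y]], rule ballI)
    fix m assume m: "m \<in> below E y - mid E w y"
    then have "m \<in> Ob E" using below_subset by blast
    then have "hbasis E w m = {} \<or> hbasis E m y = {}"
      using m hbasis_empty[OF wO] hbasis_empty[OF _ y] by (auto simp: mid_iff)
    then show "(\<Sum>b\<in>hbasis E w m. \<Sum>b'\<in>hbasis E m y.
        sm (hdual E w y \<delta> (cmp E w m y b b')) (f (cinj m y (hdual E m y b')) (cinj w m (hdual E w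
            m b)) w)) = 0"
      by auto
  qed
  finally show ?thesis .
qed

lemma prod_pi_coassoc_right:
  assumes y: "y \<in> Ob E" and f_in: "\<forall>c\<in>CE E. f c \<in> HomC E (pscale sm) prodM"
  shows "prod_pi (extC E (comult_comp E (pscale sm) f)) y
    = (\<Sum>w\<in>below E y. \<Sum>m\<in>below E y. \<Sum>b\<in>hbasis E w m. \<Sum>b'\<in>hbasis E m y.
         \<rho> m y b' (\<rho> w m b (f (cinj m y (hdual E m y b')) (cinj w m (hdual E w m b)) w)))"
proof -
  let ?S = "below E y" and ?X = "\<lambda>m b' w b. f (cinj m y (hdual E m y b')) (cinj w m (hdual E w m b)) w"
  have S: "finite ?S" "?S \<subseteq> Ob E" "lower_objs E y \<subseteq> ?S"
    using finite_below[OF y] below_subset lower_objs_subset_below[OF y] by auto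
  have X: "?X m b' w b \<in> M w" if "m \<in> ?S" "w \<in> ?S" for m b' w b
    using f_in cinj_hdual_in_CE[OF _ y] HomC_prodM_apply[OF _ _ S(2)[THEN subsetD]] that S(2) by blast
  have "prod_pi (extC E (comult_comp E (pscale sm) f)) y
      = (\<Sum>w\<in>?S. \<Sum>\<delta>\<in>hbasis E w y. \<Sum>m\<in>?S. \<Sum>b\<in>hbasis E w m. \<Sum>b'\<in>hbasis E m y.
           sm (hdual E w y \<delta> (cmp E w m y b b')) (\<rho> w y \<delta> (?X m b' w b)))"
    unfolding prod_pi_eq_sum[OF y S]
  proof (intro sum.cong refl)
    fix w \<delta> assume w: "w \<in> ?S" and \<delta>: "\<delta> \<in> hbasis E w y"
    have wO: "w \<in> Ob E" using w S(2) by blast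
    note \<rho>\<delta> = rho_linear[OF wO y hbasis_in_Hom[OF wO y \<delta>]]
    show "\<rho> w y \<delta> (extC E (comult_comp E (pscale sm) f) (cinj w y (hdual E w y \<delta>)) w)
      = (\<Sum>m\<in>?S. \<Sum>b\<in>hbasis E w m. \<Sum>b'\<in>hbasis E m y.
           sm (hdual E w y \<delta> (cmp E w m y b b')) (\<rho> w y \<delta> (?X m b' w b)))"
      using cinj_hdual_in_CE[OF wO y] comult_comp_cinj_hdual_apply[OF y w \<delta>] X[OF _ w]
      by (simp add: extC_def rho_sum[OF wO y hbasis_in_Hom[OF wO y \<delta>]] M_sum[OF wO] M_scale[OF wO]
          lin_on_scale[OF \<rho>\<delta>])
  qed
  also have "\<dots> = (\<Sum>w\<in>?S. \<Sum>m\<in>?S. \<Sum>b\<in>hbasis E w m. \<Sum>b'\<in>hbasis E m y. \<Sum>\<delta>\<in>hbasis E w y.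
           sm (hdual E w y \<delta> (cmp E w m y b b')) (\<rho> w y \<delta> (?X m b' w b)))"
    by (rule sum.cong[OF refl], rule trans[OF sum.swap], rule sum.cong[OF refl],
        rule trans[OF sum.swap], rule sum.cong[OF refl], rule sum.swap)
  also have "\<dots> = (\<Sum>w\<in>?S. \<Sum>m\<in>?S. \<Sum>b\<in>hbasis E w m. \<Sum>b'\<in>hbasis E m y. \<rho> m y b' (\<rho> w m b (?X m b' w b)))"
  proof (intro sum.cong refl)
    fix w m b b' assume w: "w \<in> ?S" and m: "m \<in> ?S" and b: "b \<in> hbasis E w m" and b': "b' \<in> hbasis E m y"
    have wO: "w \<in> Ob E" and mO: "m \<in> Ob E" using w m S(2) by auto
    have bH: "b \<in> Hom E w m" "b' \<in> Hom E m y"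
        using hbasis_in_Hom[OF wO mO b] hbasis_in_Hom[OF mO y b'] by auto
    show "(\<Sum>\<delta>\<in>hbasis E w y. sm (hdual E w y \<delta> (cmp E w m y b b')) (\<rho> w y \<delta> (?X m b' w b)))
        = \<rho> m y b' (\<rho> w m b (?X m b' w b))"
      using rho_hbasis_expansion[OF wO y cmp_in_Hom[OF wO mO y bH] X[OF m w]] rho_comp[OF wO mO y
          bH X[OF m w]]
      by simp
  qed
  finally show ?thesis .
qed

lemma prod_pi_coassoc:
  assumes f_in: "\<forall>c\<in>CE E. f c \<in> HomC E (pscale sm) prodM"
  shows "prod_pi (extC E (\<lambda>c. prod_pi (f c))) = prod_pi (extC E (comult_comp E (pscale sm) f))"
proof
  fix y
  show "prod_pi (extC E (\<lambda>c. prod_pi (f c))) y = prod_pi (extC E (comult_comp E (pscale sm) f)) y"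
  proof (cases "y \<in> Ob E")
    case y: True
    let ?t = "\<lambda>z \<beta> w \<gamma>. \<rho> z y \<beta> (\<rho> w z \<gamma> (f (cinj z y (hdual E z y \<beta>)) (cinj w z (hdual E w z \<gamma>)) w))"
    have "(\<Sum>z\<in>below E y. \<Sum>\<beta>\<in>hbasis E z y. \<Sum>w\<in>below E y. \<Sum>\<gamma>\<in>hbasis E w z. ?t z \<beta> w \<gamma>)
        = (\<Sum>z\<in>below E y. \<Sum>w\<in>below E y. \<Sum>\<beta>\<in>hbasis E z y. \<Sum>\<gamma>\<in>hbasis E w z. ?t z \<beta> w \<gamma>)"
      by (rule sum.cong[OF refl], rule sum.swap)
    also have "\<dots> = (\<Sum>z\<in>below E y. \<Sum>w\<in>below E y. \<Sum>\<gamma>\<in>hbasis E w z. \<Sum>\<beta>\<in>hbasis E z y. ?t z \<beta> w \<gamma>)"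
      by (rule sum.cong[OF refl], rule sum.cong[OF refl], rule sum.swap)
    also have "\<dots> = (\<Sum>w\<in>below E y. \<Sum>z\<in>below E y. \<Sum>\<gamma>\<in>hbasis E w z. \<Sum>\<beta>\<in>hbasis E z y. ?t z \<beta> w \<gamma>)"
      by (rule sum.swap)
    finally show ?thesis
      unfolding prod_pi_coassoc_left[OF y f_in] prod_pi_coassoc_right[OF y f_in] .
  qed (simp add: prod_pi_def)
qed

lemma is_contra_prodM: "is_contra E (pscale sm) prodM prod_pi"
  unfolding is_contra_def
  using vector_space_pscale[OF W.vector_space_axioms] prodM_subspace prod_pi_in_prodM prod_pi_linear
    prod_pi_counit prod_pi_coassoc by blast

interpretation prod_contra: contramodule E "pscale sm" prodM prod_pi
  by unfold_locales (rule is_contra_prodM)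

lemma prod_cact_e: "x \<in> Ob E \<Longrightarrow> p \<in> prodM \<Longrightarrow> cact E (pscale sm) prod_pi (e_fun E x) p = single x (p x)"
  using prod_cact_ev[OF _ _ idm_in_Hom] rho_id prodM_D(1) unfolding e_fun_eq_ev_fun by simp

lemma Theta_prodM_iff:
  assumes x: "x \<in> Ob E"
  shows "w \<in> Theta_obj E (pscale sm) prodM prod_pi x \<longleftrightarrow> (\<exists>v\<in>M x. w = single x v)"
proof
  assume "w \<in> Theta_obj E (pscale sm) prodM prod_pi x"
  then show "\<exists>v\<in>M x. w = single x v"
    unfolding prod_contra.Theta_obj_iff using prod_cact_e[OF x] prodM_D(1)[OF _ x] by blast
next
  assume "\<exists>v\<in>M x. w = single x v"
  then obtain v where v: "v \<in> M x" "w = single x v" by blast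
  then have "w = cact E (pscale sm) prod_pi (e_fun E x) (single x v)"
    using prod_cact_e[OF x single_in_prodM[OF x v(1)]] by (simp add: single_def)
  then show "w \<in> Theta_obj E (pscale sm) prodM prod_pi x"
    unfolding prod_contra.Theta_obj_iff using single_in_prodM[OF x v(1)] by blast
qed

lemma Theta_act_single:
  assumes "x \<in> Ob E" "y \<in> Ob E" "f \<in> Hom E x y" "v \<in> M x"
  shows "Theta_act E (pscale sm) prod_pi x y f (single x v) = single y (\<rho> x y f v)"
  unfolding Theta_act_def using prod_cact_ev[OF assms(1-3) single_in_prodM[OF assms(1,4)]]
  by (simp add: single_def)

lemma Emod_hom_evaluation:
  "Emod_hom E (pscale sm) (Theta_obj E (pscale sm) prodM prod_pi) (Theta_act E (pscale sm) prod_pi)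
     sm M \<rho> (\<lambda>x w. w x)"
  unfolding Emod_hom_def
proof (intro conjI ballI)
  fix x assume x: "x \<in> Ob E"
  show "lin_on (pscale sm) sm (Theta_obj E (pscale sm) prodM prod_pi x) (\<lambda>w. w x)"
    unfolding lin_on_def pscale_def by simp
  show "(\<lambda>w. w x) ` Theta_obj E (pscale sm) prodM prod_pi x \<subseteq> M x"
    using Theta_prodM_iff[OF x] by (auto simp: single_def)
next
  fix x y f w assume x: "x \<in> Ob E" and y: "y \<in> Ob E" and f: "f \<in> Hom E x y"
    and w: "w \<in> Theta_obj E (pscale sm) prodM prod_pi x"
  obtain v where v: "v \<in> M x" "w = single x v" using w Theta_prodM_iff[OF x] by blast
  show "Theta_act E (pscale sm) prod_pi x y f w y = \<rho> x y f (w x)"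
    using Theta_act_single[OF x y f v(1)] v(2) by (simp add: single_def)
qed

lemma Emod_hom_single:
  "Emod_hom E sm M \<rho> (pscale sm) (Theta_obj E (pscale sm) prodM prod_pi) (Theta_act E (pscale sm)
      prod_pi) single"
  unfolding Emod_hom_def
proof (intro conjI ballI)
  fix x assume x: "x \<in> Ob E"
  show "lin_on sm (pscale sm) (M x) (single x)"
    unfolding lin_on_def pscale_def single_def by (auto simp: fun_eq_iff)
  show "single x ` M x \<subseteq> Theta_obj E (pscale sm) prodM prod_pi x"
    using Theta_prodM_iff[OF x] by blast
qed (simp add: Theta_act_single)

lemma Theta_prodM_iso:
  "Emod_iso E (pscale sm) (Theta_obj E (pscale sm) prodM prod_pi) (Theta_act E (pscale sm) prod_pi) sm M \<rho>"
  unfolding Emod_iso_def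
  using Emod_hom_evaluation Emod_hom_single Theta_prodM_iff by (fastforce simp: single_def)

end

lemma Theta_essentially_surjective:
  fixes E :: "('o, 'h::ab_group_add, 'k::field) klcat" and sm :: "'k \<Rightarrow> 'm::ab_group_add \<Rightarrow> 'm"
  assumes "lower_finite_kcat E" and "is_Emod E sm M \<rho>"
  shows "\<exists>(P :: ('o \<Rightarrow> 'm) set) \<pi>. is_contra E (pscale sm) P \<pi> \<and>
           Emod_iso E (pscale sm) (Theta_obj E (pscale sm) P \<pi>) (Theta_act E (pscale sm) \<pi>) sm M \<rho>"
proof -
  interpret Emodule E sm M \<rho> using assms by (simp add: Emodule_def Emodule_axioms_def)
  show ?thesis using is_contra_prodM Theta_prodM_iso by blast
qed

theorem proposition7p5:
  fixes E :: "('o, 'h::ab_group_add, 'k::field) klcat"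
  assumes "klinear_cat E" and "lower_finite E"
  shows
    \<comment> \<open>Theta_E is a functor from contramodules to E-modules\<close>
    "(\<forall>(sp :: 'k \<Rightarrow> 'p::ab_group_add \<Rightarrow> 'p) P \<pi>. is_contra E sp P \<pi> \<longrightarrow>
        is_Emod E sp (Theta_obj E sp P \<pi>) (Theta_act E sp \<pi>)) \<and>
     (\<forall>(sp :: 'k \<Rightarrow> 'p \<Rightarrow> 'p) P \<pi> (sq :: 'k \<Rightarrow> 'q::ab_group_add \<Rightarrow> 'q) Q \<pi>' g.
        is_contra E sp P \<pi> \<and> is_contra E sq Q \<pi>' \<and> contra_hom E sp P \<pi> sq Q \<pi>' g \<longrightarrow>
        Emod_hom E sp (Theta_obj E sp P \<pi>) (Theta_act E sp \<pi>)
                   sq (Theta_obj E sq Q \<pi>') (Theta_act E sq \<pi>') (\<lambda>x. g)) \<and>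
     \<comment> \<open>faithful\<close>
     (\<forall>(sp :: 'k \<Rightarrow> 'p \<Rightarrow> 'p) P \<pi> (sq :: 'k \<Rightarrow> 'q \<Rightarrow> 'q) Q \<pi>' g g'.
        is_contra E sp P \<pi> \<and> is_contra E sq Q \<pi>' \<and>
        contra_hom E sp P \<pi> sq Q \<pi>' g \<and> contra_hom E sp P \<pi> sq Q \<pi>' g' \<and>
        (\<forall>x\<in>Ob E. \<forall>p\<in>Theta_obj E sp P \<pi> x. g p = g' p) \<longrightarrow> (\<forall>p\<in>P. g p = g' p)) \<and>
     \<comment> \<open>full\<close>
     (\<forall>(sp :: 'k \<Rightarrow> 'p \<Rightarrow> 'p) P \<pi> (sq :: 'k \<Rightarrow> 'q \<Rightarrow> 'q) Q \<pi>' \<eta>.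
        is_contra E sp P \<pi> \<and> is_contra E sq Q \<pi>' \<and>
        Emod_hom E sp (Theta_obj E sp P \<pi>) (Theta_act E sp \<pi>)
                   sq (Theta_obj E sq Q \<pi>') (Theta_act E sq \<pi>') \<eta> \<longrightarrow>
        (\<exists>g. contra_hom E sp P \<pi> sq Q \<pi>' g \<and>
             (\<forall>x\<in>Ob E. \<forall>p\<in>Theta_obj E sp P \<pi> x. g p = \<eta> x p))) \<and>
     \<comment> \<open>essentially surjective\<close>
     (\<forall>(sm :: 'k \<Rightarrow> 'm::ab_group_add \<Rightarrow> 'm) M \<rho>. is_Emod E sm M \<rho> \<longrightarrow>
        (\<exists>(P :: ('o \<Rightarrow> 'm) set) \<pi>. is_contra E (pscale sm) P \<pi> \<and>
           Emod_iso E (pscale sm) (Theta_obj E (pscale sm) P \<pi>) (Theta_act E (pscale sm) \<pi>) sm M \<rho>))"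
proof -
  interpret lower_finite_kcat E using assms by (rule lower_finite_kcat.intro)
  have contra: "contramodule E sp P \<pi>" if "is_contra E sp P \<pi>"
    for sp :: "'k \<Rightarrow> 'r::ab_group_add \<Rightarrow> 'r" and P \<pi>
    using that by (simp add: contramodule_def contramodule_axioms_def lower_finite_kcat_axioms)
  have pair: "contramodule_pair E sp P \<pi> sq Q \<pi>'" if "is_contra E sp P \<pi>" "is_contra E sq Q \<pi>'"
    for sp :: "'k \<Rightarrow> 'r::ab_group_add \<Rightarrow> 'r" and P \<pi> and sq :: "'k \<Rightarrow> 's::ab_group_add \<Rightarrow> 's" and Q \<pi>'
    using contra[OF that(1)] contra[OF that(2)] by (simp add: contramodule_pair_def)
  show ?thesis
    by (intro conjI allI impI ballI; (elim conjE)?)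
      (rule contramodule.is_Emod_Theta[OF contra] contramodule_pair.Theta_contra_hom[OF pair]
        contramodule_pair.Theta_faithful[OF pair] Theta_full[OF contra contra]
        Theta_essentially_surjective[OF lower_finite_kcat_axioms]; assumption)+
qed

end
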